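(* Let $1\le s<n$ and $A\in M_{s+1,n-s}$ (so $A$ has more than one row), and let $A'\in M_{s,n-s}$ be obtained from $A$ by removing one of its rows. Then $\omega_j(A')\ge\omega_j(A)$ for all $j=1,\dots,n-s$. If moreover the removed row is a rational linear combination of the remaining rows, then $\omega_j(A')=\omega_j(A)$ for all $j=1,\dots,n-s$.
   Context: Higher order exponents of a matrix $M\in M_{m,\ell}$: set $\sigma=m-1$, $N=m+\ell-1$, let $V=\mathbb R^{N+1}$ with basis $e_0,\dots,e_N$, $V_0=\mathrm{span}(e_1,\dots,e_N)$, $V_\bullet=\mathrm{span}(e_{\sigma+1},\dots,e_N)$; $e_I=e_{i_1}\wedge\dots\wedge e_{i_j}$; $\bigwedge(V)$ carries the inner product making $\{e_I\}$ orthonormal. $\mathcal S_{N+1,j}$ is the set of $w=v_1\wedge\dots\wedge v_j$ with $v_1,\dots,v_j\in\mathbb Z^{N+1}$ linearly independent; $\pi_\bullet$ is the orthogonal projection $\bigwedge^jV\to\bigwedge^jV_\bullet$. Index rows of $M$ by $0,\dots,\sigma$ and columns by $\sigma+1,\dots,N$, let $a_i=\sum_{k=\sigma+1}^N m_{i,k}e_k$, and let $R_Mc(w)\in(\bigwedge^{j-1}V_0)^{\sigma+1}$ have $i$-th component $\sum_{J\subset\{1,\dots,N\},\#J=j-1}\langle(e_i+a_i)\wedge e_J,w\rangle e_J$ (Euclidean norm). For $1\le j\le\ell$, $\omega_j(M)$ is the supremum of $v$ such that there exist $w\in\mathcal S_{N+1,j}$ with arbitrarily large $\|\pi_\bullet(w)\|$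 satisfying $\|R_Mc(w)\|<\|\pi_\bullet(w)\|^{-\frac{v+1-j}{j}}$. (Thus $\omega_j(A)$ uses $N=n$, and $\omega_j(A')$ uses $N=n-1$.) *)

theory Defs
  imports "Jordan_Normal_Form.Determinant" "HOL-Library.Extended_Real"
begin

text \<open>Vectors of V = R^(N+1) are functions nat \<Rightarrow> real (coordinates 0..N, zero beyond N).
  A matrix M of size m x l is a function nat \<Rightarrow> nat \<Rightarrow> real; entry M i c for i < m, c < l.
  Row i of M is indexed by i (= 0..sigma), column c corresponds to basis index sigma+1+c.\<close>

definition std_basis :: "nat \<Rightarrow> nat \<Rightarrow> real" where
  "std_basis k = (\<lambda>t. if t = k then 1 else 0)"

text \<open>Coordinate <e_I, v_1 \<and> ... \<and> v_j> for I of cardinality j: the j x j minor (Plucker coordinate).\<close>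
definition wedge_coord :: "(nat \<Rightarrow> real) list \<Rightarrow> nat set \<Rightarrow> real" where
  "wedge_coord vs I = det (mat (length vs) (length vs)
       (\<lambda>(a, b). (vs ! a) (sorted_list_of_set I ! b)))"

definition jsets :: "nat set \<Rightarrow> nat \<Rightarrow> nat set set" where
  "jsets S j = {I. I \<subseteq> S \<and> card I = j}"

text \<open>Inner product in \<And>^j V (orthonormal basis e_I, I \<subseteq> {0..N}).\<close>
definition wedge_inner :: "nat \<Rightarrow> (nat \<Rightarrow> real) list \<Rightarrow> (nat \<Rightarrow> real) list \<Rightarrow> real" where
  "wedge_inner N us vs = (\<Sum>I\<in>jsets {0..N} (length vs). wedge_coord us I * wedge_coord vs I)"

definition lin_indep_list :: "(nat \<Rightarrow> real) list \<Rightarrow> bool" where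
  "lin_indep_list vs \<longleftrightarrow>
     (\<forall>c :: nat \<Rightarrow> real. (\<forall>k. (\<Sum>t<length vs. c t * (vs ! t) k) = 0) \<longrightarrow> (\<forall>t<length vs. c t = 0))"

text \<open>Lists (v_1,...,v_j) of linearly independent integer vectors in Z^(N+1); their wedge
  products are exactly the elements of S_{N+1,j}.\<close>
definition int_frames :: "nat \<Rightarrow> nat \<Rightarrow> (nat \<Rightarrow> real) list set" where
  "int_frames N j = {vs. length vs = j \<and> (\<forall>v\<in>set vs. (\<forall>k. v k \<in> \<int>) \<and> (\<forall>k>N. v k = 0))
                         \<and> lin_indep_list vs}"

text \<open>Norm of pi_bullet(w): w projected onto \<And>^j V_bullet, V_bullet = span(e_(sigma+1),...,e_N).\<close>
definition proj_norm :: "nat \<Rightarrow> nat \<Rightarrow> (nat \<Rightarrow> real) list \<Rightarrow> real" where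
  "proj_norm \<sigma> N vs = sqrt (\<Sum>I\<in>jsets {\<sigma>+1..N} (length vs). (wedge_coord vs I)\<^sup>2)"

definition row_vec :: "nat \<Rightarrow> nat \<Rightarrow> (nat \<Rightarrow> nat \<Rightarrow> real) \<Rightarrow> nat \<Rightarrow> nat \<Rightarrow> real" where
  "row_vec \<sigma> N M i = (\<lambda>t. (\<Sum>k\<in>{\<sigma>+1..N}. M i (k - (\<sigma>+1)) * std_basis k t))"

text \<open>Euclidean norm of R_M c(w) in (\<And>^(j-1) V_0)^(sigma+1).\<close>
definition RMc_norm :: "nat \<Rightarrow> nat \<Rightarrow> (nat \<Rightarrow> nat \<Rightarrow> real) \<Rightarrow> (nat \<Rightarrow> real) list \<Rightarrow> real" where
  "RMc_norm \<sigma> N M vs = sqrt (\<Sum>i\<in>{0..\<sigma>}. \<Sum>J\<in>jsets {1..N} (length vs - 1).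
      (wedge_inner N ((\<lambda>t. std_basis i t + row_vec \<sigma> N M i t)
                        # map std_basis (sorted_list_of_set J)) vs)\<^sup>2)"

definition omega :: "nat \<Rightarrow> nat \<Rightarrow> nat \<Rightarrow> (nat \<Rightarrow> nat \<Rightarrow> real) \<Rightarrow> ereal" where
  "omega j m l M = (let \<sigma> = m - 1; N = m + l - 1 in
     Sup (ereal ` {v :: real. \<forall>B :: real. \<exists>vs\<in>int_frames N j.
            proj_norm \<sigma> N vs > B \<and>
            RMc_norm \<sigma> N M vs < proj_norm \<sigma> N vs powr (- ((v + 1 - real j) / real j))}))"

end

theory Submission
  imports Defs
begin

(*
  Deleting coordinate r of R^(n+1) sends an integer frame w to a frame with the same projection
  pi_bullet(w), since r <= s is a row index and the column coordinates are only shifted; by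
  Cauchy-Binet every component of R_(A') c of the image is a component of R_A c(w). Hence every
  exponent of approximation of A is one of A', i.e. omega_j(A') >= omega_j(A).

  If row r is a rational combination of the other rows, the converse map inserts at r the same
  combination of the coordinates, scaled by a common denominator D to stay integral. It multiplies
  pi_bullet by D^j, and its adjoint pulls the row form e_r + a_r back to a combination of the row
  forms of A'. So each component of R_A c of the image is a Gram determinant of a combination of
  row forms of A' and of bounded covectors; expanding the covectors in the basis e_0 + a_0, e_1, ...,
  e_N bounds it by a constant times |R_(A') c|. Constant factors cost only an arbitrarily small part
  of the exponent, so omega_j(A) >= omega_j(A').
*)

section \<open>Gram determinants\<close>

definition coord_inner :: "nat \<Rightarrow> (nat \<Rightarrow> real) \<Rightarrow> (nat \<Rightarrow> real) \<Rightarrow> real" where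
  "coord_inner N u v = (\<Sum>t\<in>{0..N}. u t * v t)"

definition gram_det :: "nat \<Rightarrow> (nat \<Rightarrow> real) list \<Rightarrow> (nat \<Rightarrow> real) list \<Rightarrow> real" where
  "gram_det N us vs = det (mat (length vs) (length vs) (\<lambda>(a, b). coord_inner N (us ! a) (vs ! b)))"

(* The index set of det_linear_rows_sum: choice functions normalised to the identity outside {0..<j}. *)
definition choice_funs :: "nat \<Rightarrow> nat set \<Rightarrow> (nat \<Rightarrow> nat) set" where
  "choice_funs j S = {f. (\<forall>i\<in>{0..<j}. f i \<in> S) \<and> (\<forall>i. i \<notin> {0..<j} \<longrightarrow> f i = i)}"

lemma finite_choice_funs: "finite S \<Longrightarrow> finite (choice_funs j S)"
  unfolding choice_funs_def by (rule finite_bounded_functions) auto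

lemma det_mat_sum_rows_expand:
  fixes c :: "nat \<Rightarrow> nat \<Rightarrow> real" and R :: "nat \<Rightarrow> nat \<Rightarrow> nat \<Rightarrow> real"
  assumes S: "finite S"
  shows "det (mat j j (\<lambda>(a, b). \<Sum>x\<in>S. c a x * R a x b)) =
    (\<Sum>f\<in>choice_funs j S. (\<Prod>a\<in>{0..<j}. c a (f a)) * det (mat j j (\<lambda>(a, b). R a (f a) b)))"
proof -
  have "mat j j (\<lambda>(a, b). \<Sum>x\<in>S. c a x * R a x b) =
     mat\<^sub>r j j (\<lambda>a. finsum_vec TYPE(real) j (\<lambda>x. c a x \<cdot>\<^sub>v vec j (R a x)) S)"
    by (rule eq_matI) (auto simp: index_finsum_vec[OF S])
  also have "det \<dots> = (\<Sum>f\<in>choice_funs j S. det (mat\<^sub>r j j (\<lambda>a. c a (f a) \<cdot>\<^sub>v vec j (R a (f a)))))"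
    unfolding choice_funs_def by (rule det_linear_rows_sum[OF S]) auto
  also have "\<dots> = (\<Sum>f\<in>choice_funs j S. (\<Prod>a\<in>{0..<j}. c a (f a)) * det (mat\<^sub>r j j (\<lambda>a. vec j (R a (f a)))))"
    by (intro sum.cong refl det_rows_mul) auto
  also have "(\<lambda>f. mat\<^sub>r j j (\<lambda>a. vec j (R a (f a)))) = (\<lambda>f. mat j j (\<lambda>(a, b). R a (f a) b))"
    by (intro ext eq_matI) auto
  finally show ?thesis .
qed

lemma finite_jsets: "finite S \<Longrightarrow> finite (jsets S j)"
  unfolding jsets_def by (rule finite_subset[of _ "Pow S"]) auto

lemma jsets_sorted_list_of_set:
  assumes "I \<in> jsets S j" "finite S"
  shows "finite I" "length (sorted_list_of_set I) = j"
    and "bij_betw ((!) (sorted_list_of_set I)) {0..<j} I"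
proof -
  show "finite I" using assms unfolding jsets_def by (auto intro: finite_subset)
  then show "length (sorted_list_of_set I) = j" "bij_betw ((!) (sorted_list_of_set I)) {0..<j} I"
    using assms unfolding jsets_def by (auto intro!: bij_betw_nth)
qed

definition perm_choice :: "nat \<Rightarrow> nat set \<Rightarrow> (nat \<Rightarrow> nat) \<Rightarrow> nat \<Rightarrow> nat" where
  "perm_choice j I p a = (if a < j then sorted_list_of_set I ! p a else a)"

lemma bij_betw_perm_choice_jset:
  assumes S: "finite S" and I: "I \<in> jsets S j" and p: "p permutes {0..<j}"
  shows "bij_betw (perm_choice j I p) {0..<j} I"
proof (rule bij_betw_imageI)
  note bij = jsets_sorted_list_of_set(3)[OF I S]
  have pj: "a < j \<Longrightarrow> p a < j" for a using permutes_in_image[OF p] by simp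
  have "perm_choice j I p ` {0..<j} = (!) (sorted_list_of_set I) ` p ` {0..<j}"
    unfolding image_comp by (intro image_cong) (auto simp: perm_choice_def)
  then show "perm_choice j I p ` {0..<j} = I"
    unfolding permutes_image[OF p] bij_betw_imp_surj_on[OF bij] .
  show "inj_on (perm_choice j I p) {0..<j}"
  proof (rule inj_onI)
    fix a b assume "a \<in> {0..<j}" "b \<in> {0..<j}" "perm_choice j I p a = perm_choice j I p b"
    then have "p a = p b"
      using inj_onD[OF bij_betw_imp_inj_on[OF bij]] pj by (auto simp: perm_choice_def)
    then show "a = b" using permutes_inj[OF p] by (auto dest: injD)
  qed
qed

lemma perm_choice_in_choice_funs:
  assumes S: "finite S" and I: "I \<in> jsets S j" and p: "p permutes {0..<j}"
  shows "perm_choice j I p \<in> choice_funs j S"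
  using bij_betw_imp_surj_on[OF bij_betw_perm_choice_jset[OF assms]] I
  unfolding choice_funs_def jsets_def by (auto simp: perm_choice_def)

lemma inj_choice_fun_eq_perm_choice:
  assumes S: "finite S" and f: "f \<in> choice_funs j S" "inj_on f {0..<j}"
  obtains p where "p permutes {0..<j}" "f = perm_choice j (f ` {0..<j}) p"
proof -
  define I where "I = f ` {0..<j}"
  have I: "I \<in> jsets S j"
    using f card_image[OF f(2)] unfolding I_def choice_funs_def jsets_def by auto
  note bij = jsets_sorted_list_of_set(3)[OF I S]
  let ?nth = "(!) (sorted_list_of_set I)"
  have inj_nth: "inj_on ?nth {0..<j}" and surj_nth: "?nth ` {0..<j} = I"
    using bij by (simp_all add: bij_betw_def)
  define p where "p a = (if a < j then the_inv_into {0..<j} ?nth (f a) else a)" for a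
  have f_in: "f a \<in> ?nth ` {0..<j}" if "a < j" for a
    unfolding surj_nth using that by (simp add: I_def)
  have p_in: "p a \<in> {0..<j}" if "a < j" for a
    using the_inv_into_into[OF inj_nth f_in[OF that] order_refl] that by (simp add: p_def)
  have nth_p: "?nth (p a) = f a" if "a < j" for a
    using f_the_inv_into_f[OF inj_nth f_in[OF that]] that by (simp add: p_def)
  have "p permutes {0..<j}"
  proof (rule inj_on_nat_permutes)
    show "inj_on p {0..<j}"
    proof (rule inj_onI)
      fix a b assume ab: "a \<in> {0..<j}" "b \<in> {0..<j}" "p a = p b"
      then have "f a = f b" using nth_p[of a] nth_p[of b] by auto
      then show "a = b" using inj_onD[OF f(2)] ab by blast
    qed
  qed (use p_in in \<open>auto simp: p_def\<close>)
  moreover have "f = perm_choice j I p"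
    using nth_p f(1) by (auto simp: perm_choice_def choice_funs_def p_def[of a for a])
  ultimately show thesis using that unfolding I_def by blast
qed

lemma bij_betw_perm_choice:
  assumes S: "finite S"
  shows "bij_betw (\<lambda>(I, p). perm_choice j I p) (jsets S j \<times> {p. p permutes {0..<j}})
    {f \<in> choice_funs j S. inj_on f {0..<j}}"
proof (rule bij_betw_imageI)
  show "inj_on (\<lambda>(I, p). perm_choice j I p) (jsets S j \<times> {p. p permutes {0..<j}})"
  proof (rule inj_onI, clarsimp)
    fix I p I' p' assume I: "I \<in> jsets S j" "I' \<in> jsets S j" and p: "p permutes {0..<j}" "p' permutes {0..<j}"
      and eq: "perm_choice j I p = perm_choice j I' p'"
    then have "I = I'"
      using bij_betw_imp_surj_on[OF bij_betw_perm_choice_jset[OF S I(1) p(1)]]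
        bij_betw_imp_surj_on[OF bij_betw_perm_choice_jset[OF S I(2) p(2)]] by simp
    have "p a = p' a" for a
    proof (cases "a < j")
      case True
      then have "sorted_list_of_set I ! p a = sorted_list_of_set I ! p' a"
        using fun_cong[OF eq, of a] \<open>I = I'\<close> by (simp add: perm_choice_def)
      then show ?thesis
        using inj_onD[OF bij_betw_imp_inj_on[OF jsets_sorted_list_of_set(3)[OF I(1) S]]]
          permutes_in_image[OF p(1)] permutes_in_image[OF p(2)] True by auto
    qed (simp add: permutes_not_in[OF p(1)] permutes_not_in[OF p(2)])
    then show "I = I' \<and> p = p'" using \<open>I = I'\<close> by auto
  qed
  show "(\<lambda>(I, p). perm_choice j I p) ` (jsets S j \<times> {p. p permutes {0..<j}})
      = {f \<in> choice_funs j S. inj_on f {0..<j}}"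
  proof (intro equalityI subsetI)
    fix f assume f: "f \<in> {f \<in> choice_funs j S. inj_on f {0..<j}}"
    then obtain p where p: "p permutes {0..<j}" "f = perm_choice j (f ` {0..<j}) p"
      using inj_choice_fun_eq_perm_choice[OF S] by blast
    have "f ` {0..<j} \<in> jsets S j"
      using f card_image[of f "{0..<j}"] by (auto simp: choice_funs_def jsets_def)
    then show "f \<in> (\<lambda>(I, p). perm_choice j I p) ` (jsets S j \<times> {p. p permutes {0..<j}})"
      using p by (intro rev_image_eqI[of "(f ` {0..<j}, p)"]) auto
  qed (use perm_choice_in_choice_funs[OF S] bij_betw_perm_choice_jset[OF S] in \<open>auto simp: bij_betw_def\<close>)
qed

lemma det_mat_perm_choice:
  assumes I: "finite I" "length (sorted_list_of_set I) = length vs" and p: "p permutes {0..<length vs}"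
  shows "det (mat (length vs) (length vs) (\<lambda>(a, b). (vs ! b) (perm_choice (length vs) I p a)))
    = signof p * wedge_coord vs I"
proof -
  let ?j = "length vs"
  define T where "T = mat ?j ?j (\<lambda>(a, b). (vs ! b) (sorted_list_of_set I ! a))"
  have T: "T \<in> carrier_mat ?j ?j" unfolding T_def by simp
  have "mat ?j ?j (\<lambda>(a, b). (vs ! b) (perm_choice ?j I p a)) = mat ?j ?j (\<lambda>(a, b). T $$ (p a, b))"
    using permutes_in_image[OF p] unfolding T_def by (intro eq_matI) (auto simp: perm_choice_def)
  moreover have "transpose_mat T = mat ?j ?j (\<lambda>(a, b). (vs ! a) (sorted_list_of_set I ! b))"
    unfolding T_def by (rule eq_matI) auto
  ultimately show ?thesis
    unfolding wedge_coord_def using det_permute_rows[OF T p] det_transpose[OF T] by simp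
qed

lemma sum_permutations_perm_choice:
  assumes I: "finite I" "length (sorted_list_of_set I) = length vs" and len: "length us = length vs"
  shows "(\<Sum>p | p permutes {0..<length vs}. (\<Prod>a\<in>{0..<length vs}. (us ! a) (perm_choice (length vs) I p a))
      * det (mat (length vs) (length vs) (\<lambda>(a, b). (vs ! b) (perm_choice (length vs) I p a))))
    = wedge_coord us I * wedge_coord vs I"
proof -
  have "(\<Prod>a\<in>{0..<length vs}. (us ! a) (perm_choice (length vs) I p a))
      = (\<Prod>a\<in>{0..<length us}. (us ! a) (sorted_list_of_set I ! p a))" for p
    using len by (intro prod.cong) (simp_all add: perm_choice_def)
  moreover have "wedge_coord us I = (\<Sum>p | p permutes {0..<length us}.
      signof p * (\<Prod>a\<in>{0..<length us}. (us ! a) (sorted_list_of_set I ! p a)))"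
    unfolding wedge_coord_def det_def'[OF mat_carrier]
    by (intro sum.cong refl arg_cong[where f = "\<lambda>x. _ * x"] prod.cong) (auto dest: permutes_in_image)
  ultimately show ?thesis
    using det_mat_perm_choice[OF I] len by (simp add: sum_distrib_left mult_ac)
qed

theorem wedge_inner_eq_gram_det:
  assumes len: "length us = length vs"
  shows "wedge_inner N us vs = gram_det N us vs"
proof -
  let ?j = "length vs" and ?S = "{0..N}" and ?P = "{p. p permutes {0..<length vs}}"
  define h where "h f = (\<Prod>a\<in>{0..<?j}. (us ! a) (f a)) * det (mat ?j ?j (\<lambda>(a, b). (vs ! b) (f a)))"
    for f :: "nat \<Rightarrow> nat"
  have "gram_det N us vs = (\<Sum>f\<in>choice_funs ?j ?S. h f)"
    unfolding gram_det_def coord_inner_def h_def by (rule det_mat_sum_rows_expand) simp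
  also have "\<dots> = (\<Sum>f\<in>{f \<in> choice_funs ?j ?S. inj_on f {0..<?j}}. h f)"
  proof (rule sum.mono_neutral_right)
    show "\<forall>f\<in>choice_funs ?j ?S - {f \<in> choice_funs ?j ?S. inj_on f {0..<?j}}. h f = 0"
    proof
      fix f assume "f \<in> choice_funs ?j ?S - {f \<in> choice_funs ?j ?S. inj_on f {0..<?j}}"
      then obtain a b where ab: "a < ?j" "b < ?j" "a \<noteq> b" "f a = f b"
        unfolding inj_on_def by auto
      have "det (mat ?j ?j (\<lambda>(a, b). (vs ! b) (f a))) = 0"
        by (rule det_identical_rows[OF _ ab(3,1,2)]) (auto intro!: eq_vecI simp: ab)
      then show "h f = 0" unfolding h_def by simp
    qed
  qed (auto intro: finite_choice_funs)
  also have "\<dots> = (\<Sum>(I, p)\<in>jsets ?S ?j \<times> ?P. h (perm_choice ?j I p))"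
    using sum.reindex_bij_betw[OF bij_betw_perm_choice[where S = ?S and j = ?j], of h]
    by (simp add: case_prod_unfold)
  also have "\<dots> = (\<Sum>I\<in>jsets ?S ?j. \<Sum>p\<in>?P. h (perm_choice ?j I p))"
    by (rule sum.cartesian_product[symmetric])
  also have "\<dots> = (\<Sum>I\<in>jsets ?S ?j. wedge_coord us I * wedge_coord vs I)"
    unfolding h_def using jsets_sorted_list_of_set(1,2) len
    by (intro sum.cong refl sum_permutations_perm_choice) auto
  also have "\<dots> = wedge_inner N us vs" unfolding wedge_inner_def ..
  finally show ?thesis ..
qed

lemma gram_det_cong:
  assumes "\<And>a t. a < length vs \<Longrightarrow> t \<le> N \<Longrightarrow> (us ! a) t = (us' ! a) t"
  shows "gram_det N us vs = gram_det N us' vs"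
proof -
  have "coord_inner N (us ! a) (vs ! b) = coord_inner N (us' ! a) (vs ! b)" if "a < length vs" for a b
    unfolding coord_inner_def using assms[OF that] by (intro sum.cong) auto
  then show ?thesis unfolding gram_det_def by (intro arg_cong[where f = det] eq_matI) auto
qed

lemma gram_det_scale:
  assumes "length ws = length vs"
    and "\<And>a b. a < length vs \<Longrightarrow> b < length vs \<Longrightarrow>
      coord_inner N' (us' ! a) (ws ! b) = c * coord_inner N (us ! a) (vs ! b)"
  shows "gram_det N' us' ws = c ^ length vs * gram_det N us vs"
proof -
  have "mat (length vs) (length vs) (\<lambda>(a, b). coord_inner N' (us' ! a) (ws ! b)) =
      c \<cdot>\<^sub>m mat (length vs) (length vs) (\<lambda>(a, b). coord_inner N (us ! a) (vs ! b))"
    using assms(2) by (intro eq_matI) auto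
  then show ?thesis unfolding gram_det_def assms(1) by simp
qed

lemma gram_det_eq_0_if_rows_eq:
  assumes "a < length vs" "b < length vs" "a \<noteq> b" "\<And>t. t \<le> N \<Longrightarrow> (us ! a) t = (us ! b) t"
  shows "gram_det N us vs = 0"
proof -
  have "coord_inner N (us ! a) v = coord_inner N (us ! b) v" for v
    unfolding coord_inner_def using assms(4) by (intro sum.cong) auto
  then show ?thesis unfolding gram_det_def
    by (intro det_identical_rows[OF _ assms(3,1,2)]) (auto intro!: eq_vecI simp: assms(1,2))
qed

lemma gram_det_swap_rows:
  assumes "a < length vs" "b < length vs" "a \<noteq> b" "length us = length vs"
  shows "gram_det N (us[a := us ! b, b := us ! a]) vs = - gram_det N us vs"
proof -
  let ?M = "mat (length vs) (length vs) (\<lambda>(a, b). coord_inner N (us ! a) (vs ! b))"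
  have "mat (length vs) (length vs) (\<lambda>(c, d). coord_inner N ((us[a := us ! b, b := us ! a]) ! c) (vs ! d))
      = swaprows a b ?M"
    unfolding mat_swaprows_def using assms by (intro eq_matI) (auto simp: nth_list_update)
  then show ?thesis unfolding gram_det_def using det_swaprows[OF assms(1-3), of ?M] by simp
qed

lemma gram_det_permute_list:
  assumes "p permutes {..<length vs}" "length us = length vs"
  shows "gram_det N (permute_list p us) vs = signof p * gram_det N us vs"
proof -
  let ?M = "mat (length vs) (length vs) (\<lambda>(a, b). coord_inner N (us ! a) (vs ! b))"
  have "mat (length vs) (length vs) (\<lambda>(c, d). coord_inner N (permute_list p us ! c) (vs ! d)) =
     mat (length vs) (length vs) (\<lambda>(i, j). ?M $$ (p i, j))"
    using assms permutes_in_image[OF assms(1)] by (intro eq_matI) (auto simp: permute_list_nth)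
  then show ?thesis
    unfolding gram_det_def using det_permute_rows[OF _ assms(1)[folded atLeast0LessThan], of ?M] by simp
qed

lemma coord_inner_sum_left:
  assumes "finite S" "\<And>t. t \<le> N \<Longrightarrow> u t = (\<Sum>x\<in>S. c x * h x t)"
  shows "coord_inner N u v = (\<Sum>x\<in>S. c x * coord_inner N (h x) v)"
  unfolding coord_inner_def using assms(2)
  by (simp add: sum_distrib_left sum_distrib_right mult.assoc sum.swap[of _ S])

lemma gram_det_expand_rows:
  assumes "finite S" "length us = length vs"
    and "\<And>a t. a < length vs \<Longrightarrow> t \<le> N \<Longrightarrow> (us ! a) t = (\<Sum>x\<in>S. c a x * h a x t)"
  shows "gram_det N us vs = (\<Sum>f\<in>choice_funs (length vs) S. (\<Prod>a\<in>{0..<length vs}. c a (f a)) *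
            gram_det N (map (\<lambda>a. h a (f a)) [0..<length vs]) vs)"
proof -
  let ?j = "length vs"
  have "mat ?j ?j (\<lambda>(a, b). coord_inner N (us ! a) (vs ! b)) =
     mat ?j ?j (\<lambda>(a, b). \<Sum>x\<in>S. c a x * coord_inner N (h a x) (vs ! b))"
    using coord_inner_sum_left[OF assms(1) assms(3)] by (intro eq_matI) auto
  then have "gram_det N us vs = (\<Sum>f\<in>choice_funs ?j S. (\<Prod>a\<in>{0..<?j}. c a (f a)) *
      det (mat ?j ?j (\<lambda>(a, b). coord_inner N (h a (f a)) (vs ! b))))"
    unfolding gram_det_def
    using det_mat_sum_rows_expand[OF assms(1), of ?j c "\<lambda>a x b. coord_inner N (h a x) (vs ! b)"] by simp
  also have "\<dots> = (\<Sum>f\<in>choice_funs ?j S. (\<Prod>a\<in>{0..<?j}. c a (f a)) *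
      gram_det N (map (\<lambda>a. h a (f a)) [0..<?j]) vs)"
    unfolding gram_det_def
    by (intro sum.cong refl arg_cong[where f = "\<lambda>x. _ * x"] arg_cong[where f = det] eq_matI) auto
  finally show ?thesis .
qed

lemma gram_det_linear_row:
  assumes "finite S" "a < length vs" "length us = length vs"
    and "\<And>t. t \<le> N \<Longrightarrow> (us ! a) t = (\<Sum>x\<in>S. c x * h x t)"
  shows "gram_det N us vs = (\<Sum>x\<in>S. c x * gram_det N (us[a := h x]) vs)"
proof -
  let ?j = "length vs"
  let ?row = "\<lambda>u. vec ?j (\<lambda>b. coord_inner N u (vs ! b))"
  have "mat ?j ?j (\<lambda>(i, b). coord_inner N (us ! i) (vs ! b)) =
     mat\<^sub>r ?j ?j (\<lambda>i. if i = a then finsum_vec TYPE(real) ?j (\<lambda>x. c x \<cdot>\<^sub>v ?row (h x)) S else ?row (us ! i))"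
    using coord_inner_sum_left[OF assms(1) assms(4)] by (intro eq_matI) (auto simp: index_finsum_vec[OF assms(1)])
  then have "gram_det N us vs =
      (\<Sum>x\<in>S. det (mat\<^sub>r ?j ?j (\<lambda>i. if i = a then c x \<cdot>\<^sub>v ?row (h x) else ?row (us ! i))))"
    unfolding gram_det_def by (simp, subst det_linear_row_finsum[OF assms(1) _ assms(2)]) auto
  also have "\<dots> = (\<Sum>x\<in>S. c x * gram_det N (us[a := h x]) vs)"
  proof (rule sum.cong[OF refl])
    fix x
    let ?c = "\<lambda>i. if i = a then c x else 1"
    have "mat\<^sub>r ?j ?j (\<lambda>i. if i = a then c x \<cdot>\<^sub>v ?row (h x) else ?row (us ! i))
        = mat\<^sub>r ?j ?j (\<lambda>i. ?c i \<cdot>\<^sub>v ?row (us[a := h x] ! i))"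
      using assms(2,3) by (intro eq_matI) auto
    also have "det \<dots> = prod ?c {0..<?j} * det (mat\<^sub>r ?j ?j (\<lambda>i. ?row (us[a := h x] ! i)))"
      by (rule det_rows_mul) auto
    also have "prod ?c {0..<?j} = c x" using assms(2) by (simp add: prod.delta')
    also have "mat\<^sub>r ?j ?j (\<lambda>i. ?row (us[a := h x] ! i))
        = mat ?j ?j (\<lambda>(i, b). coord_inner N (us[a := h x] ! i) (vs ! b))"
      by (intro eq_matI) auto
    finally show "det (mat\<^sub>r ?j ?j (\<lambda>i. if i = a then c x \<cdot>\<^sub>v ?row (h x) else ?row (us ! i)))
        = c x * gram_det N (us[a := h x]) vs"
      unfolding gram_det_def .
  qed
  finally show ?thesis .
qed

section \<open>Bounds by the components of R_M c\<close>

definition row_form :: "nat \<Rightarrow> nat \<Rightarrow> (nat \<Rightarrow> nat \<Rightarrow> real) \<Rightarrow> nat \<Rightarrow> nat \<Rightarrow> real" where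
  "row_form \<sigma> N M i = (\<lambda>t. std_basis i t + row_vec \<sigma> N M i t)"

lemma row_vec_eq: "row_vec \<sigma> N M i t = (if \<sigma> < t \<and> t \<le> N then M i (t - Suc \<sigma>) else 0)"
proof -
  have "row_vec \<sigma> N M i t = (\<Sum>k\<in>{\<sigma>+1..N}. if t = k then M i (k - (\<sigma>+1)) else 0)"
    unfolding row_vec_def std_basis_def by (intro sum.cong) auto
  also have "\<dots> = (if \<sigma> < t \<and> t \<le> N then M i (t - Suc \<sigma>) else 0)"
    by (subst sum.delta') auto
  finally show ?thesis .
qed

lemma row_form_eq:
  "row_form \<sigma> N M i t = (if t = i then 1 else 0) + (if \<sigma> < t \<and> t \<le> N then M i (t - Suc \<sigma>) else 0)"
  unfolding row_form_def row_vec_eq std_basis_def by simp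

lemma RMc_norm_nonneg: "RMc_norm \<sigma> N M vs \<ge> 0"
  unfolding RMc_norm_def by (auto intro!: sum_nonneg)

lemma RMc_norm_eq_gram_det:
  assumes "vs \<noteq> []"
  shows "RMc_norm \<sigma> N M vs = sqrt (\<Sum>i\<in>{0..\<sigma>}. \<Sum>J\<in>jsets {1..N} (length vs - 1).
      (gram_det N (row_form \<sigma> N M i # map std_basis (sorted_list_of_set J)) vs)\<^sup>2)"
proof -
  have "wedge_inner N (row_form \<sigma> N M i # map std_basis (sorted_list_of_set J)) vs
      = gram_det N (row_form \<sigma> N M i # map std_basis (sorted_list_of_set J)) vs"
    if "J \<in> jsets {1..N} (length vs - 1)" for i J
    using that assms jsets_sorted_list_of_set(2)[OF that]
    by (intro wedge_inner_eq_gram_det) (simp add: Suc_leI)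
  then show ?thesis unfolding RMc_norm_def row_form_def by simp
qed

lemma abs_gram_det_row_form_le_RMc_norm:
  assumes i: "i \<le> \<sigma>" and len: "length vs = Suc (length ts)" and ts: "set ts \<subseteq> {1..N}"
  shows "\<bar>gram_det N (row_form \<sigma> N M i # map std_basis ts) vs\<bar> \<le> RMc_norm \<sigma> N M vs"
proof (cases "distinct ts")
  case True
  let ?J = "set ts"
  let ?G = "\<lambda>i J. gram_det N (row_form \<sigma> N M i # map std_basis (sorted_list_of_set J)) vs"
  have ne: "vs \<noteq> []" using len by auto
  have J: "?J \<in> jsets {1..N} (length vs - 1)"
    unfolding jsets_def using ts distinct_card[OF True] len by auto
  have "mset (row_form \<sigma> N M i # map std_basis ts) = mset (row_form \<sigma> N M i # map std_basis (sorted_list_of_set ?J))"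
    using True by (simp add: sorted_list_of_set_sort_remdups distinct_remdups_id)
  then obtain p where p: "p permutes {..<length vs}"
    "permute_list p (row_form \<sigma> N M i # map std_basis (sorted_list_of_set ?J)) = row_form \<sigma> N M i # map std_basis ts"
    using len distinct_card[OF True] by (metis mset_eq_permutation length_map length_Cons length_sorted_list_of_set)
  have "gram_det N (row_form \<sigma> N M i # map std_basis ts) vs = signof p * ?G i ?J"
    unfolding p(2)[symmetric]
    by (rule gram_det_permute_list[OF p(1)]) (use len distinct_card[OF True] in simp)
  then have "\<bar>gram_det N (row_form \<sigma> N M i # map std_basis ts) vs\<bar> = \<bar>?G i ?J\<bar>"
    by (simp add: abs_mult sign_def)
  also have "\<dots> = sqrt ((?G i ?J)\<^sup>2)" by simp
  also have "\<dots> \<le> RMc_norm \<sigma> N M vs"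
    unfolding RMc_norm_eq_gram_det[OF ne]
  proof (intro real_sqrt_le_mono order_trans[OF _ member_le_sum[of i]])
    show "(?G i ?J)\<^sup>2 \<le> (\<Sum>J\<in>jsets {1..N} (length vs - 1). (?G i J)\<^sup>2)"
      by (rule member_le_sum[OF J]) (auto intro: finite_jsets)
  qed (use i in \<open>auto intro: sum_nonneg\<close>)
  finally show ?thesis .
next
  case False
  then obtain a b where ab: "a < length ts" "b < length ts" "a \<noteq> b" "ts ! a = ts ! b"
    by (auto simp: distinct_conv_nth)
  have "gram_det N (row_form \<sigma> N M i # map std_basis ts) vs = 0"
    by (rule gram_det_eq_0_if_rows_eq[of "Suc a" _ "Suc b"]) (use ab len in auto)
  then show ?thesis using RMc_norm_nonneg by simp
qed

definition adapted_basis :: "nat \<Rightarrow> nat \<Rightarrow> (nat \<Rightarrow> nat \<Rightarrow> real) \<Rightarrow> nat \<Rightarrow> nat \<Rightarrow> real" where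
  "adapted_basis \<sigma> N M u = (if u = 0 then row_form \<sigma> N M 0 else std_basis u)"

definition adapted_coeff :: "nat \<Rightarrow> (nat \<Rightarrow> nat \<Rightarrow> real) \<Rightarrow> (nat \<Rightarrow> real) \<Rightarrow> nat \<Rightarrow> real" where
  "adapted_coeff \<sigma> M y x = (if x \<le> \<sigma> then y x else y x - y 0 * M 0 (x - Suc \<sigma>))"

lemma adapted_basis_expansion:
  assumes "t \<le> N"
  shows "y t = (\<Sum>x\<in>{0..N}. adapted_coeff \<sigma> M y x * adapted_basis \<sigma> N M x t)"
proof -
  have "(\<Sum>x\<in>{0..N}. adapted_coeff \<sigma> M y x * adapted_basis \<sigma> N M x t) =
     y 0 * row_form \<sigma> N M 0 t + (\<Sum>x\<in>{Suc 0..N}. adapted_coeff \<sigma> M y x * std_basis x t)"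
    by (subst sum.atLeast_Suc_atMost) (auto simp: adapted_basis_def adapted_coeff_def)
  also have "(\<Sum>x\<in>{Suc 0..N}. adapted_coeff \<sigma> M y x * std_basis x t) =
      (if t \<in> {Suc 0..N} then adapted_coeff \<sigma> M y t else 0)"
    unfolding std_basis_def by (simp add: sum.delta' if_distrib[of "\<lambda>z. _ * z"] cong: if_cong)
  finally show ?thesis using assms
    by (cases "t = 0") (auto simp: row_form_eq adapted_coeff_def)
qed

lemma abs_adapted_coeff_le:
  assumes "x \<le> N" "\<And>u. u \<le> N \<Longrightarrow> \<bar>y u\<bar> \<le> Y"
  shows "\<bar>adapted_coeff \<sigma> M y x\<bar> \<le> Y * (1 + (\<Sum>u\<in>{Suc \<sigma>..N}. \<bar>M 0 (u - Suc \<sigma>)\<bar>))"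
proof -
  have Y: "0 \<le> Y" "\<bar>y x\<bar> \<le> Y" "\<bar>y 0\<bar> \<le> Y" using assms by (auto intro: order_trans[OF abs_ge_zero])
  have S: "0 \<le> (\<Sum>u\<in>{Suc \<sigma>..N}. \<bar>M 0 (u - Suc \<sigma>)\<bar>)" by (auto intro: sum_nonneg)
  show ?thesis
  proof (cases "x \<le> \<sigma>")
    case False
    then have "\<bar>M 0 (x - Suc \<sigma>)\<bar> \<le> (\<Sum>u\<in>{Suc \<sigma>..N}. \<bar>M 0 (u - Suc \<sigma>)\<bar>)"
      using assms(1) by (intro member_le_sum) auto
    then have "\<bar>y x\<bar> + \<bar>y 0\<bar> * \<bar>M 0 (x - Suc \<sigma>)\<bar> \<le> Y + Y * (\<Sum>u\<in>{Suc \<sigma>..N}. \<bar>M 0 (u - Suc \<sigma>)\<bar>)"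
      using Y by (intro add_mono mult_mono) auto
    then show ?thesis
      using False abs_triangle_ineq4[of "y x" "y 0 * M 0 (x - Suc \<sigma>)"]
      by (simp add: adapted_coeff_def abs_mult algebra_simps)
  next
    case True
    have "Y \<le> Y * (1 + (\<Sum>u\<in>{Suc \<sigma>..N}. \<bar>M 0 (u - Suc \<sigma>)\<bar>))"
      using Y(1) S by (simp add: distrib_left)
    then show ?thesis using True Y by (auto simp: adapted_coeff_def)
  qed
qed

lemma abs_gram_det_row_form_adapted_le_RMc_norm:
  assumes i: "i \<le> \<sigma>" and len: "length vs = Suc (length us)" and us: "set us \<subseteq> {0..N}"
    and i0: "i = 0 \<or> 0 \<notin> set us"
  shows "\<bar>gram_det N (row_form \<sigma> N M i # map (adapted_basis \<sigma> N M) us) vs\<bar> \<le> RMc_norm \<sigma> N M vs"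
proof (cases "0 \<in> set us")
  case True
  then obtain p where p: "p < length us" "us ! p = 0" by (auto simp: in_set_conv_nth)
  have "gram_det N (row_form \<sigma> N M i # map (adapted_basis \<sigma> N M) us) vs = 0"
    by (rule gram_det_eq_0_if_rows_eq[of 0 _ "Suc p"]) (use p len True i0 in \<open>auto simp: adapted_basis_def\<close>)
  then show ?thesis using RMc_norm_nonneg by simp
next
  case False
  have "set us \<subseteq> {1..N}"
  proof
    fix x assume "x \<in> set us"
    then have "x \<noteq> 0" "x \<le> N" using us False by (metis, auto)
    then show "x \<in> {1..N}" by simp
  qed
  moreover have "map (adapted_basis \<sigma> N M) us = map std_basis us"
    using False by (auto simp: adapted_basis_def)
  ultimately show ?thesis using i len by (simp only: abs_gram_det_row_form_le_RMc_norm length_map)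
qed

definition row_weight :: "nat \<Rightarrow> nat \<Rightarrow> (nat \<Rightarrow> nat \<Rightarrow> real) \<Rightarrow> real" where
  "row_weight \<sigma> N M = 1 + (\<Sum>k\<in>{0..\<sigma>}. \<Sum>u\<in>{Suc \<sigma>..N}. \<bar>M k (u - Suc \<sigma>)\<bar>)"

lemma row_weight_ge:
  assumes "i \<le> \<sigma>"
  shows "1 + (\<Sum>u\<in>{Suc \<sigma>..N}. \<bar>M i (u - Suc \<sigma>)\<bar>) \<le> row_weight \<sigma> N M"
  unfolding row_weight_def using assms
  by (intro add_left_mono member_le_sum[where f = "\<lambda>k. \<Sum>u\<in>{Suc \<sigma>..N}. \<bar>M k (u - Suc \<sigma>)\<bar>"])
    (auto intro: sum_nonneg)

lemma one_le_row_weight: "1 \<le> row_weight \<sigma> N M"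
  unfolding row_weight_def by (auto intro!: sum_nonneg)

lemma abs_gram_det_row_form_adapted_le:
  assumes \<sigma>N: "\<sigma> < N" and i: "i \<le> \<sigma>" and len: "length vs = Suc (length us)" and us: "set us \<subseteq> {0..N}"
  shows "\<bar>gram_det N (row_form \<sigma> N M i # map (adapted_basis \<sigma> N M) us) vs\<bar>
    \<le> row_weight \<sigma> N M * RMc_norm \<sigma> N M vs"
proof (cases "i = 0 \<or> 0 \<notin> set us")
  case True
  then show ?thesis
    using abs_gram_det_row_form_adapted_le_RMc_norm[OF i len us True, of M]
      mult_right_mono[OF one_le_row_weight[of \<sigma> N M] RMc_norm_nonneg[of \<sigma> N M vs]] by simp
next
  case False
  then obtain p where p: "p < length us" "us ! p = 0" and i0: "i \<noteq> 0" by (auto simp: in_set_conv_nth)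
  let ?S = "insert i {Suc \<sigma>..N}"
  let ?c = "\<lambda>x. if x = i then 1 else M i (x - Suc \<sigma>)"
  let ?rest = "map (adapted_basis \<sigma> N M) us"
  have iS: "i \<notin> {Suc \<sigma>..N}" using i by auto
  have "row_form \<sigma> N M i t = (\<Sum>x\<in>?S. ?c x * std_basis x t)" for t
    using iS unfolding row_form_def row_vec_def by (simp add: sum.insert) (intro sum.cong, auto)
  then have expand: "gram_det N (row_form \<sigma> N M i # ?rest) vs = (\<Sum>x\<in>?S. ?c x * gram_det N (std_basis x # ?rest) vs)"
    using gram_det_linear_row[of ?S 0 vs "row_form \<sigma> N M i # ?rest" N ?c std_basis] len by simp
  \<comment> \<open>Swapping e_x with the adapted basis vector row_form 0 at position p reduces each term to i = 0.\<close>
  have term_le: "\<bar>gram_det N (std_basis x # ?rest) vs\<bar> \<le> RMc_norm \<sigma> N M vs" if x: "x \<in> ?S" for x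
  proof -
    have x1: "x \<noteq> 0" "x \<le> N" using x i0 i \<sigma>N by auto
    let ?L = "std_basis x # ?rest"
    have "?L[0 := ?L ! Suc p, Suc p := ?L ! 0] = row_form \<sigma> N M 0 # map (adapted_basis \<sigma> N M) (us[p := x])"
      using p x1 by (simp add: adapted_basis_def map_update)
    moreover have "gram_det N (?L[0 := ?L ! Suc p, Suc p := ?L ! 0]) vs = - gram_det N ?L vs"
      by (rule gram_det_swap_rows) (use p len in auto)
    moreover have "\<bar>gram_det N (row_form \<sigma> N M 0 # map (adapted_basis \<sigma> N M) (us[p := x])) vs\<bar> \<le> RMc_norm \<sigma> N M vs"
      by (rule abs_gram_det_row_form_adapted_le_RMc_norm)
        (use len us x1 in \<open>auto dest: set_update_subset_insert[THEN subsetD]\<close>)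
    ultimately show ?thesis by simp
  qed
  have "\<bar>gram_det N (row_form \<sigma> N M i # ?rest) vs\<bar> \<le> (\<Sum>x\<in>?S. \<bar>?c x\<bar> * \<bar>gram_det N (std_basis x # ?rest) vs\<bar>)"
    unfolding expand by (rule order_trans[OF sum_abs]) (simp add: abs_mult)
  also have "\<dots> \<le> (\<Sum>x\<in>?S. \<bar>?c x\<bar> * RMc_norm \<sigma> N M vs)"
    by (intro sum_mono mult_left_mono term_le) auto
  also have "\<dots> = (\<Sum>x\<in>?S. \<bar>?c x\<bar>) * RMc_norm \<sigma> N M vs"
    by (simp add: sum_distrib_right)
  also have "(\<Sum>x\<in>{Suc \<sigma>..N}. \<bar>?c x\<bar>) = (\<Sum>u\<in>{Suc \<sigma>..N}. \<bar>M i (u - Suc \<sigma>)\<bar>)"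
    using iS by (intro sum.cong) auto
  then have "(\<Sum>x\<in>?S. \<bar>?c x\<bar>) = 1 + (\<Sum>u\<in>{Suc \<sigma>..N}. \<bar>M i (u - Suc \<sigma>)\<bar>)"
    unfolding sum.insert[OF finite_atLeastAtMost iS] by simp
  also have "\<dots> * RMc_norm \<sigma> N M vs \<le> row_weight \<sigma> N M * RMc_norm \<sigma> N M vs"
    by (rule mult_right_mono[OF row_weight_ge[OF i] RMc_norm_nonneg])
  finally show ?thesis .
qed

lemma abs_gram_det_adapted_choice_le:
  assumes \<sigma>N: "\<sigma> < N" and len: "length vs = Suc m"
    and f: "f \<in> choice_funs (Suc m) {0..N}" and f0: "f 0 \<le> \<sigma>"
  shows "\<bar>gram_det N (map (\<lambda>a. (if a = 0 then row_form \<sigma> N M else adapted_basis \<sigma> N M) (f a)) [0..<Suc m]) vs\<bar>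
    \<le> row_weight \<sigma> N M * RMc_norm \<sigma> N M vs"
proof -
  have "map (\<lambda>a. (if a = 0 then row_form \<sigma> N M else adapted_basis \<sigma> N M) (f a)) [0..<Suc m]
      = row_form \<sigma> N M (f 0) # map (adapted_basis \<sigma> N M) (map (f \<circ> Suc) [0..<m])"
    by (simp add: upt_conv_Cons map_Suc_upt[symmetric] del: upt_Suc)
  moreover have "set (map (f \<circ> Suc) [0..<m]) \<subseteq> {0..N}" using f by (auto simp: choice_funs_def)
  ultimately show ?thesis
    using abs_gram_det_row_form_adapted_le[OF \<sigma>N f0, of vs "map (f \<circ> Suc) [0..<m]" M] len by simp
qed

(* Coefficients of the rows of (\<Sum>k. \<alpha> k * row_form k) # ys: of row 0 in the row forms,
   of the other rows in the adapted basis. *)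
definition expansion_coeff ::
    "nat \<Rightarrow> (nat \<Rightarrow> nat \<Rightarrow> real) \<Rightarrow> (nat \<Rightarrow> real) \<Rightarrow> (nat \<Rightarrow> real) list \<Rightarrow> nat \<Rightarrow> nat \<Rightarrow> real" where
  "expansion_coeff \<sigma> M \<alpha> ys a x =
     (if a = 0 then (if x \<le> \<sigma> then \<alpha> x else 0) else adapted_coeff \<sigma> M (ys ! (a - 1)) x)"

lemma gram_det_row_form_combination_expand:
  assumes \<sigma>N: "\<sigma> < N" and len: "length vs = Suc (length ys)"
  shows "gram_det N ((\<lambda>t. \<Sum>k\<in>{0..\<sigma>}. \<alpha> k * row_form \<sigma> N M k t) # ys) vs
    = (\<Sum>f\<in>choice_funs (length vs) {0..N}. (\<Prod>a\<in>{0..<length vs}. expansion_coeff \<sigma> M \<alpha> ys a (f a)) *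
        gram_det N (map (\<lambda>a. (if a = 0 then row_form \<sigma> N M else adapted_basis \<sigma> N M) (f a)) [0..<length vs]) vs)"
proof (rule gram_det_expand_rows)
  fix a t assume t: "t \<le> N"
  let ?c = "expansion_coeff \<sigma> M \<alpha> ys" and ?h = "\<lambda>a. if a = 0 then row_form \<sigma> N M else adapted_basis \<sigma> N M"
  show "(((\<lambda>t. \<Sum>k\<in>{0..\<sigma>}. \<alpha> k * row_form \<sigma> N M k t) # ys) ! a) t = (\<Sum>x\<in>{0..N}. ?c a x * ?h a x t)"
  proof (cases a)
    case 0
    have "(\<Sum>x\<in>{0..N}. ?c a x * ?h a x t) = (\<Sum>k\<in>{0..\<sigma>}. \<alpha> k * row_form \<sigma> N M k t)"
      using 0 \<sigma>N by (intro sum.mono_neutral_cong_right) (auto simp: expansion_coeff_def)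
    then show ?thesis using 0 by simp
  qed (use adapted_basis_expansion[OF t] in \<open>simp add: expansion_coeff_def\<close>)
qed (use len in simp_all)

lemma abs_expansion_coeff_le:
  assumes \<alpha>: "\<And>k. \<bar>\<alpha> k\<bar> \<le> Y" and ys: "\<And>a u. a < length ys \<Longrightarrow> u \<le> N \<Longrightarrow> \<bar>(ys ! a) u\<bar> \<le> Y"
    and a: "a \<le> length ys" and x: "x \<le> N"
  shows "\<bar>expansion_coeff \<sigma> M \<alpha> ys a x\<bar> \<le> Y * row_weight \<sigma> N M"
proof (cases a)
  case 0
  have "Y \<le> Y * row_weight \<sigma> N M"
    using mult_left_mono[OF one_le_row_weight, of Y] \<alpha>[of 0] by simp
  then show ?thesis using 0 \<alpha>[of x] \<alpha>[of 0] by (auto simp: expansion_coeff_def)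
next
  case (Suc a')
  have Y: "0 \<le> Y" using \<alpha>[of 0] by linarith
  have "\<And>u. u \<le> N \<Longrightarrow> \<bar>(ys ! a') u\<bar> \<le> Y" using ys a Suc by auto
  from abs_adapted_coeff_le[where y = "ys ! a'" and \<sigma> = \<sigma> and M = M, OF x this]
  show ?thesis
    using Suc mult_left_mono[OF row_weight_ge[where i = 0 and \<sigma> = \<sigma> and N = N and M = M] Y]
    by (simp add: expansion_coeff_def)
qed

lemma abs_expansion_term_le:
  assumes \<sigma>N: "\<sigma> < N" and len: "length vs = Suc (length ys)" and f: "f \<in> choice_funs (length vs) {0..N}"
    and \<alpha>: "\<And>k. \<bar>\<alpha> k\<bar> \<le> Y" and ys: "\<And>a u. a < length ys \<Longrightarrow> u \<le> N \<Longrightarrow> \<bar>(ys ! a) u\<bar> \<le> Y"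
  shows "\<bar>(\<Prod>a\<in>{0..<length vs}. expansion_coeff \<sigma> M \<alpha> ys a (f a)) *
      gram_det N (map (\<lambda>a. (if a = 0 then row_form \<sigma> N M else adapted_basis \<sigma> N M) (f a)) [0..<length vs]) vs\<bar>
    \<le> (Y * row_weight \<sigma> N M) ^ length vs * row_weight \<sigma> N M * RMc_norm \<sigma> N M vs"
proof (cases "f 0 \<le> \<sigma>")
  case True
  have YW: "0 \<le> Y * row_weight \<sigma> N M"
    using \<alpha>[of 0] order_trans[OF zero_le_one one_le_row_weight] by simp
  have "\<bar>\<Prod>a\<in>{0..<length vs}. expansion_coeff \<sigma> M \<alpha> ys a (f a)\<bar> \<le> (Y * row_weight \<sigma> N M) ^ length vs"
  proof -
    have "(\<Prod>a\<in>{0..<length vs}. \<bar>expansion_coeff \<sigma> M \<alpha> ys a (f a)\<bar>)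
        \<le> (\<Prod>a\<in>{0..<length vs}. Y * row_weight \<sigma> N M)"
    proof (rule prod_mono)
      fix a assume "a \<in> {0..<length vs}"
      then have "a \<le> length ys" "f a \<le> N" using len f by (auto simp: choice_funs_def)
      then show "0 \<le> \<bar>expansion_coeff \<sigma> M \<alpha> ys a (f a)\<bar> \<and> \<bar>expansion_coeff \<sigma> M \<alpha> ys a (f a)\<bar> \<le> Y * row_weight \<sigma> N M"
        using abs_expansion_coeff_le[OF \<alpha> ys] by simp
    qed
    then show ?thesis by (simp add: abs_prod)
  qed
  moreover have "\<bar>gram_det N (map (\<lambda>a. (if a = 0 then row_form \<sigma> N M else adapted_basis \<sigma> N M) (f a))
      [0..<length vs]) vs\<bar> \<le> row_weight \<sigma> N M * RMc_norm \<sigma> N M vs"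
    using abs_gram_det_adapted_choice_le[OF \<sigma>N len f[unfolded len] True] len by simp
  ultimately show ?thesis
    unfolding abs_mult mult.assoc by (rule mult_mono) (use zero_le_power[OF YW] in auto)
next
  case False
  then have "(\<Prod>a\<in>{0..<length vs}. expansion_coeff \<sigma> M \<alpha> ys a (f a)) = 0"
    using len by (intro prod_zero) (auto simp: expansion_coeff_def)
  moreover have "0 \<le> (Y * row_weight \<sigma> N M) ^ length vs * row_weight \<sigma> N M * RMc_norm \<sigma> N M vs"
    using \<alpha>[of 0] order_trans[OF zero_le_one one_le_row_weight] RMc_norm_nonneg[of \<sigma> N M vs] by simp
  ultimately show ?thesis by (simp only: mult_zero_left abs_zero)
qed

lemma abs_gram_det_row_form_combination_le:
  assumes \<sigma>N: "\<sigma> < N"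
  obtains C where "\<And>vs \<alpha> ys. length vs = Suc m \<Longrightarrow> length ys = m \<Longrightarrow> (\<And>k. \<bar>\<alpha> k\<bar> \<le> Y) \<Longrightarrow>
     (\<And>a u. a < m \<Longrightarrow> u \<le> N \<Longrightarrow> \<bar>(ys ! a) u\<bar> \<le> Y) \<Longrightarrow>
     \<bar>gram_det N ((\<lambda>t. \<Sum>k\<in>{0..\<sigma>}. \<alpha> k * row_form \<sigma> N M k t) # ys) vs\<bar> \<le> C * RMc_norm \<sigma> N M vs"
proof -
  let ?B = "(Y * row_weight \<sigma> N M) ^ Suc m * row_weight \<sigma> N M"
  show thesis
  proof (rule that[of "real (card (choice_funs (Suc m) {0..N})) * ?B"])
    fix vs ys :: "(nat \<Rightarrow> real) list" and \<alpha> :: "nat \<Rightarrow> real"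
    assume len: "length vs = Suc m" "length ys = m" and \<alpha>: "\<And>k. \<bar>\<alpha> k\<bar> \<le> Y"
      and ys: "\<And>a u. a < m \<Longrightarrow> u \<le> N \<Longrightarrow> \<bar>(ys ! a) u\<bar> \<le> Y"
    have len': "length vs = Suc (length ys)" using len by simp
    have "\<bar>gram_det N ((\<lambda>t. \<Sum>k\<in>{0..\<sigma>}. \<alpha> k * row_form \<sigma> N M k t) # ys) vs\<bar>
        \<le> (\<Sum>f\<in>choice_funs (length vs) {0..N}. (Y * row_weight \<sigma> N M) ^ length vs * row_weight \<sigma> N M
          * RMc_norm \<sigma> N M vs)"
      unfolding gram_det_row_form_combination_expand[OF \<sigma>N len']
      by (rule order_trans[OF sum_abs sum_mono], rule abs_expansion_term_le[OF \<sigma>N len' _ \<alpha>])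
        (use ys len in auto)
    also have "\<dots> = (\<Sum>f\<in>choice_funs (Suc m) {0..N}. ?B * RMc_norm \<sigma> N M vs)"
      unfolding len(1) ..
    also have "\<dots> = real (card (choice_funs (Suc m) {0..N})) * ?B * RMc_norm \<sigma> N M vs"
      by (simp only: sum_constant mult.assoc)
    finally show "\<bar>gram_det N ((\<lambda>t. \<Sum>k\<in>{0..\<sigma>}. \<alpha> k * row_form \<sigma> N M k t) # ys) vs\<bar>
        \<le> real (card (choice_funs (Suc m) {0..N})) * ?B * RMc_norm \<sigma> N M vs" .
  qed
qed

section \<open>Deleting a coordinate\<close>

lemma sorted_list_of_set_image_strict_mono_on:
  assumes g: "strict_mono_on I g" and I: "finite I"
  shows "sorted_list_of_set (g ` I) = map g (sorted_list_of_set I)"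
proof -
  have "sorted_wrt (<) (map g (sorted_list_of_set I))"
    unfolding sorted_wrt_map
    by (rule sorted_wrt_mono_rel[OF _ sorted_list_of_set.strict_sorted_key_list_of_set])
      (use I strict_mono_onD[OF g] in auto)
  then show ?thesis
    by (intro sorted_distinct_set_unique) (use I in \<open>auto simp: strict_sorted_iff\<close>)
qed

lemma wedge_coord_reindex:
  assumes I: "finite I" "card I = length vs" and len: "length ws = length vs" and g: "strict_mono_on I g"
    and ws: "\<And>a x. a < length vs \<Longrightarrow> x \<in> I \<Longrightarrow> (ws ! a) x = c * (vs ! a) (g x)"
  shows "wedge_coord ws I = c ^ length vs * wedge_coord vs (g ` I)"
proof -
  have "sorted_list_of_set I ! b \<in> I" if "b < length vs" for b
    using I that by (metis length_sorted_list_of_set nth_mem set_sorted_list_of_set)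
  then have "mat (length ws) (length ws) (\<lambda>(a, b). (ws ! a) (sorted_list_of_set I ! b)) =
     c \<cdot>\<^sub>m mat (length vs) (length vs) (\<lambda>(a, b). (vs ! a) (sorted_list_of_set (g ` I) ! b))"
    unfolding sorted_list_of_set_image_strict_mono_on[OF g I(1)] using len I
    by (intro eq_matI) (auto intro!: ws)
  then show ?thesis unfolding wedge_coord_def by simp
qed

lemma sum_jsets_image:
  assumes "inj_on g S"
  shows "(\<Sum>I\<in>jsets (g ` S) j. F I) = (\<Sum>I\<in>jsets S j. F (g ` I))"
proof -
  have inj: "inj_on ((`) g) (jsets S j)"
    using inj_on_image[of g "Pow S"] assms by (auto simp: jsets_def intro: inj_on_subset)
  have "(`) g ` jsets S j = jsets (g ` S) j"
  proof (intro equalityI subsetI)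
    fix J assume "J \<in> (`) g ` jsets S j"
    then show "J \<in> jsets (g ` S) j"
      using assms by (auto simp: jsets_def card_image inj_on_subset)
  next
    fix J assume J: "J \<in> jsets (g ` S) j"
    then obtain I where "I \<subseteq> S" "J = g ` I" unfolding jsets_def by (auto simp: subset_image_iff)
    then show "J \<in> (`) g ` jsets S j"
      using J assms by (auto simp: jsets_def card_image inj_on_subset)
  qed
  then show ?thesis using sum.reindex[OF inj, of F] by simp
qed

lemma lin_indep_list_if_proj_norm_pos:
  assumes "proj_norm \<sigma> N ws > 0"
  shows "lin_indep_list ws"
  unfolding lin_indep_list_def
proof (intro allI impI)
  fix c :: "nat \<Rightarrow> real" and t
  assume dep: "\<forall>k. (\<Sum>t<length ws. c t * (ws ! t) k) = 0" and t: "t < length ws"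
  let ?j = "length ws"
  show "c t = 0"
  proof (rule ccontr)
    assume "c t \<noteq> 0"
    then have c: "vec ?j c \<noteq> 0\<^sub>v ?j" using t by (metis index_vec index_zero_vec(1))
    have "wedge_coord ws I = 0" for I
    proof -
      let ?M = "mat ?j ?j (\<lambda>(a, b). (ws ! a) (sorted_list_of_set I ! b))"
      have "transpose_mat ?M *\<^sub>v vec ?j c = 0\<^sub>v ?j"
        using dep by (intro eq_vecI) (auto simp: scalar_prod_def atLeast0LessThan mult.commute)
      then have "det (transpose_mat ?M) = 0"
        using det_0_iff_vec_prod_zero_field[of "transpose_mat ?M" ?j] c
        by (metis carrier_vec_dim_vec dim_vec transpose_carrier_mat mat_carrier)
      then show ?thesis unfolding wedge_coord_def using det_transpose[of ?M ?j] by simp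
    qed
    then have "proj_norm \<sigma> N ws = 0" unfolding proj_norm_def by simp
    then show False using assms by simp
  qed
qed

definition skip :: "nat \<Rightarrow> nat \<Rightarrow> nat" where
  "skip r t = (if t < r then t else Suc t)"

lemma strict_mono_on_skip: "strict_mono_on A (skip r)"
  unfolding strict_mono_on_def skip_def by auto

lemma inj_skip: "inj (skip r)"
  using strict_mono_on_imp_inj_on[OF strict_mono_on_skip] by simp

lemma skip_neq: "skip r t \<noteq> r"
  unfolding skip_def by auto

lemma skip_image_atLeastAtMost:
  assumes "r \<le> Suc N"
  shows "skip r ` {0..N} = {0..Suc N} - {r}"
proof
  show "skip r ` {0..N} \<subseteq> {0..Suc N} - {r}" using skip_neq[of r] by (auto simp: skip_def)
  show "{0..Suc N} - {r} \<subseteq> skip r ` {0..N}"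
  proof
    fix x assume x: "x \<in> {0..Suc N} - {r}"
    then have "x = skip r (if x < r then x else x - 1)" "(if x < r then x else x - 1) \<in> {0..N}"
      using assms by (auto simp: skip_def)
    then show "x \<in> skip r ` {0..N}" by blast
  qed
qed

lemma coord_inner_skip:
  assumes "r \<le> Suc N" "u r = 0"
  shows "coord_inner (Suc N) u v = coord_inner N (u \<circ> skip r) (v \<circ> skip r)"
proof -
  have "{0..Suc N} = insert r (skip r ` {0..N})" using skip_image_atLeastAtMost[OF assms(1)] assms(1) by auto
  moreover have "r \<notin> skip r ` {0..N}" using skip_neq[of r] by (metis imageE)
  ultimately have "coord_inner (Suc N) u v = u r * v r + (\<Sum>t\<in>skip r ` {0..N}. u t * v t)"
    unfolding coord_inner_def by simp
  also have "\<dots> = coord_inner N (u \<circ> skip r) (v \<circ> skip r)"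
    using assms(2) by (simp add: coord_inner_def sum.reindex inj_on_subset[OF inj_skip])
  finally show ?thesis .
qed

lemma jsets_mono: "S \<subseteq> T \<Longrightarrow> jsets S j \<subseteq> jsets T j"
  unfolding jsets_def by auto

lemma gram_det_skip:
  assumes "r \<le> Suc N" "length us = length vs" "\<And>a. a < length vs \<Longrightarrow> (us ! a) r = 0"
  shows "gram_det N (map (\<lambda>u. u \<circ> skip r) us) (map (\<lambda>v. v \<circ> skip r) vs) = gram_det (Suc N) us vs"
proof -
  have "gram_det N (map (\<lambda>u. u \<circ> skip r) us) (map (\<lambda>v. v \<circ> skip r) vs) = 1 ^ length vs * gram_det (Suc N) us vs"
  proof (rule gram_det_scale)
    fix a b assume ab: "a < length vs" "b < length vs"
    then show "coord_inner N (map (\<lambda>u. u \<circ> skip r) us ! a) (map (\<lambda>v. v \<circ> skip r) vs ! b)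
        = 1 * coord_inner (Suc N) (us ! a) (vs ! b)"
      using coord_inner_skip[where u = "us ! a" and v = "vs ! b", OF assms(1) assms(3)[OF ab(1)]] assms(2) by simp
  qed simp
  then show ?thesis by simp
qed

lemma row_form_skip:
  assumes "r \<le> Suc \<sigma>" "t \<le> N"
  shows "row_form (Suc \<sigma>) (Suc N) M (skip r i) (skip r t) = row_form \<sigma> N (\<lambda>i. M (skip r i)) i t"
  using assms inj_eq[OF inj_skip] by (auto simp: row_form_eq skip_def)

lemma row_form_skip_at:
  assumes "r \<le> Suc \<sigma>"
  shows "row_form (Suc \<sigma>) (Suc N) M (skip r i) r = 0"
  using assms skip_neq[of r i] by (auto simp: row_form_eq)

lemma proj_norm_skip:
  assumes "r \<le> Suc \<sigma>"
  shows "proj_norm \<sigma> N (map (\<lambda>v. v \<circ> skip r) vs) = proj_norm (Suc \<sigma>) (Suc N) vs"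
proof -
  have "wedge_coord (map (\<lambda>v. v \<circ> skip r) vs) I = wedge_coord vs (Suc ` I)"
    if I: "I \<in> jsets {\<sigma>+1..N} (length vs)" for I
  proof -
    have "finite I" "card I = length vs" using I unfolding jsets_def by (auto intro: finite_subset)
    then have "wedge_coord (map (\<lambda>v. v \<circ> skip r) vs) I = 1 ^ length vs * wedge_coord vs (Suc ` I)"
      by (rule wedge_coord_reindex) (use I assms in \<open>auto simp: jsets_def skip_def strict_mono_on_def\<close>)
    then show ?thesis by simp
  qed
  moreover have "(\<Sum>I\<in>jsets {Suc \<sigma>+1..Suc N} (length vs). (wedge_coord vs I)\<^sup>2)
      = (\<Sum>I\<in>jsets {\<sigma>+1..N} (length vs). (wedge_coord vs (Suc ` I))\<^sup>2)"
    using sum_jsets_image[where g = Suc and S = "{\<sigma>+1..N}" and F = "\<lambda>I. (wedge_coord vs I)\<^sup>2"] by simp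
  ultimately show ?thesis
    unfolding proj_norm_def length_map by simp
qed

lemma int_frames_skip:
  assumes vs: "vs \<in> int_frames (Suc N) j" and r: "r \<le> Suc N"
    and indep: "proj_norm \<sigma> N (map (\<lambda>v. v \<circ> skip r) vs) > 0"
  shows "map (\<lambda>v. v \<circ> skip r) vs \<in> int_frames N j"
proof -
  have "skip r k > Suc N" if "k > N" for k using that r by (auto simp: skip_def)
  then show ?thesis
    using vs lin_indep_list_if_proj_norm_pos[OF indep] unfolding int_frames_def by auto
qed

lemma RMc_norm_skip_le:
  assumes r: "r \<le> Suc \<sigma>" and \<sigma>N: "\<sigma> \<le> N" and vs: "vs \<noteq> []"
  shows "RMc_norm \<sigma> N (\<lambda>i. M (skip r i)) (map (\<lambda>v. v \<circ> skip r) vs) \<le> RMc_norm (Suc \<sigma>) (Suc N) M vs"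
proof -
  let ?ws = "map (\<lambda>v. v \<circ> skip r) vs" and ?j = "length vs - 1"
  let ?G' = "\<lambda>i J. gram_det N (row_form \<sigma> N (\<lambda>i. M (skip r i)) i # map std_basis (sorted_list_of_set J)) ?ws"
  let ?G = "\<lambda>i J. gram_det (Suc N) (row_form (Suc \<sigma>) (Suc N) M i # map std_basis (sorted_list_of_set J)) vs"
  have G': "?G' i J = ?G (skip r i) (skip r ` J)" if J: "J \<in> jsets {1..N} ?j" for i J
  proof -
    let ?us = "row_form (Suc \<sigma>) (Suc N) M (skip r i) # map std_basis (map (skip r) (sorted_list_of_set J))"
    have len: "length ?us = length vs" using jsets_sorted_list_of_set(2)[OF J] vs by simp
    have "?G' i J = gram_det N (map (\<lambda>u. u \<circ> skip r) ?us) ?ws"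
      using row_form_skip[OF r] len
      by (intro gram_det_cong) (auto simp: nth_Cons' std_basis_def inj_eq[OF inj_skip])
    also have "\<dots> = gram_det (Suc N) ?us vs"
      by (rule gram_det_skip)
        (use r \<sigma>N len row_form_skip_at[OF r] not_sym[OF skip_neq] in \<open>auto simp: nth_Cons' std_basis_def\<close>)
    finally show ?thesis
      using jsets_sorted_list_of_set(1)[OF J]
      by (simp add: sorted_list_of_set_image_strict_mono_on[OF strict_mono_on_skip])
  qed
  have "(\<Sum>i\<in>{0..\<sigma>}. \<Sum>J\<in>jsets {1..N} ?j. (?G' i J)\<^sup>2) =
      (\<Sum>i\<in>skip r ` {0..\<sigma>}. \<Sum>J\<in>jsets (skip r ` {1..N}) ?j. (?G i J)\<^sup>2)"
    by (simp add: G' sum.reindex inj_on_subset[OF inj_skip] sum_jsets_image cong: sum.cong)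
  also have "\<dots> \<le> (\<Sum>i\<in>skip r ` {0..\<sigma>}. \<Sum>J\<in>jsets {1..Suc N} ?j. (?G i J)\<^sup>2)"
    by (intro sum_mono sum_mono2 finite_jsets jsets_mono) (auto simp: skip_def)
  also have "\<dots> \<le> (\<Sum>i\<in>{0..Suc \<sigma>}. \<Sum>J\<in>jsets {1..Suc N} ?j. (?G i J)\<^sup>2)"
    by (rule sum_mono2) (auto simp: skip_def intro: sum_nonneg)
  finally have "(\<Sum>i\<in>{0..\<sigma>}. \<Sum>J\<in>jsets {1..N} ?j. (?G' i J)\<^sup>2)
      \<le> (\<Sum>i\<in>{0..Suc \<sigma>}. \<Sum>J\<in>jsets {1..Suc N} ?j. (?G i J)\<^sup>2)" .
  moreover have ws: "?ws \<noteq> []" using vs by simp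
  ultimately show ?thesis
    unfolding RMc_norm_eq_gram_det[OF vs] RMc_norm_eq_gram_det[OF ws] length_map
    by (intro real_sqrt_le_mono)
qed

section \<open>Inserting a dependent coordinate\<close>

lemma common_denominator:
  assumes "finite S" "\<And>k. k \<in> S \<Longrightarrow> q k \<in> \<rat>"
  obtains D :: nat where "D > 0" "\<And>k. k \<in> S \<Longrightarrow> real D * q k \<in> \<int>"
  using assms
proof (induction S arbitrary: thesis rule: finite_induct)
  case empty
  then show ?case using empty.prems(1)[of 1] by simp
next
  case (insert x F)
  obtain D :: nat where D: "D > 0" "\<And>k. k \<in> F \<Longrightarrow> real D * q k \<in> \<int>"
    using insert by blast
  obtain a b where ab: "b > 0" "q x = of_int a / of_int b"
    using insert.prems(2)[of x] by (auto elim: Rats_cases')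
  have "real (D * nat b) * q k \<in> \<int>" if "k \<in> insert x F" for k
  proof (cases "k = x")
    case True
    then have "real (D * nat b) * q k = real D * of_int a" using ab by simp
    then show ?thesis by (simp only:) (intro Ints_mult Ints_of_nat Ints_of_int)
  next
    case False
    then have "real (D * nat b) * q k = (real D * q k) * of_int b" using ab by simp
    moreover have "real D * q k \<in> \<int>" using D(2) False that by simp
    ultimately show ?thesis by (simp only:) (rule Ints_mult[OF _ Ints_of_int])
  qed
  moreover have "D * nat b > 0" using D(1) ab(1) by simp
  ultimately show ?case using insert.prems(1) by blast
qed

definition unskip :: "nat \<Rightarrow> nat \<Rightarrow> nat" where
  "unskip r t = (if t < r then t else t - 1)"

lemma unskip_skip [simp]: "unskip r (skip r u) = u"
  unfolding unskip_def skip_def by auto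

lemma skip_unskip: "t \<noteq> r \<Longrightarrow> skip r (unskip r t) = t"
  unfolding unskip_def skip_def by auto

(* The r-th coordinate becomes the q-combination of the coordinates of the other rows, so that the
   adjoint map pulls the row form of row r back to a combination of the other row forms; the factor D
   keeps integer vectors integral. *)
definition insert_coord :: "nat \<Rightarrow> nat \<Rightarrow> nat \<Rightarrow> (nat \<Rightarrow> real) \<Rightarrow> (nat \<Rightarrow> real) \<Rightarrow> nat \<Rightarrow> real" where
  "insert_coord D r s q v =
     (\<lambda>t. real D * (if t = r then (\<Sum>u<s. q (skip r u) * v u) else v (unskip r t)))"

definition insert_coord_dual :: "nat \<Rightarrow> nat \<Rightarrow> (nat \<Rightarrow> real) \<Rightarrow> (nat \<Rightarrow> real) \<Rightarrow> nat \<Rightarrow> real" where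
  "insert_coord_dual r s q y = (\<lambda>u. y (skip r u) + (if u < s then y r * q (skip r u) else 0))"

lemma insert_coord_skip: "insert_coord D r s q v (skip r u) = real D * v u"
  unfolding insert_coord_def using skip_neq[of r u] by simp

lemma coord_inner_insert_coord:
  assumes "r \<le> Suc N" "s \<le> Suc N"
  shows "coord_inner (Suc N) y (insert_coord D r s q v) = real D * coord_inner N (insert_coord_dual r s q y) v"
proof -
  let ?w = "insert_coord D r s q v"
  have "{0..Suc N} = insert r (skip r ` {0..N})" using skip_image_atLeastAtMost[OF assms(1)] assms(1) by auto
  moreover have "r \<notin> skip r ` {0..N}" using skip_neq[of r] by (metis imageE)
  ultimately have "coord_inner (Suc N) y ?w = y r * ?w r + (\<Sum>u\<in>{0..N}. y (skip r u) * ?w (skip r u))"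
    unfolding coord_inner_def by (simp add: sum.reindex inj_on_subset[OF inj_skip])
  also have "y r * ?w r = real D * (\<Sum>u<s. y r * q (skip r u) * v u)"
    by (simp add: insert_coord_def sum_distrib_left mult_ac)
  also have "(\<Sum>u<s. y r * q (skip r u) * v u) = (\<Sum>u\<in>{0..N}. (if u < s then y r * q (skip r u) else 0) * v u)"
    using assms(2) by (intro sum.mono_neutral_cong_left) auto
  finally show ?thesis
    unfolding coord_inner_def insert_coord_dual_def insert_coord_skip
    by (simp add: algebra_simps sum.distrib sum_distrib_left)
qed

lemma gram_det_insert_coord:
  assumes "r \<le> Suc N" "s \<le> Suc N" "length us = length vs"
  shows "gram_det (Suc N) us (map (insert_coord D r s q) vs)
    = real D ^ length vs * gram_det N (map (insert_coord_dual r s q) us) vs"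
  by (rule gram_det_scale) (use assms coord_inner_insert_coord in auto)

lemma insert_coord_dual_row_form:
  assumes "r \<le> Suc \<sigma>" "i \<noteq> r" "t \<le> N"
  shows "insert_coord_dual r (Suc \<sigma>) q (row_form (Suc \<sigma>) (Suc N) M i) t
    = row_form \<sigma> N (\<lambda>i. M (skip r i)) (unskip r i) t"
  using assms skip_unskip[OF assms(2)] unskip_skip[of r t]
  by (auto simp: insert_coord_dual_def row_form_eq skip_def unskip_def)

lemma insert_coord_dual_row_form_dependent:
  assumes r: "r \<le> Suc \<sigma>" and t: "t \<le> N"
    and dep: "\<forall>c<N - \<sigma>. M r c = (\<Sum>i\<in>{0..Suc \<sigma>} - {r}. q i * M i c)"
  shows "insert_coord_dual r (Suc \<sigma>) q (row_form (Suc \<sigma>) (Suc N) M r) t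
    = (\<Sum>k\<in>{0..\<sigma>}. q (skip r k) * row_form \<sigma> N (\<lambda>i. M (skip r i)) k t)"
proof -
  have rows: "{0..Suc \<sigma>} - {r} = skip r ` {0..\<sigma>}" using skip_image_atLeastAtMost[OF r] by simp
  have dep_t: "(\<Sum>k\<in>{0..\<sigma>}. q (skip r k) * M (skip r k) (t - Suc \<sigma>)) = M r (t - Suc \<sigma>)" if "\<sigma> < t"
    using dep that t unfolding rows by (simp add: sum.reindex inj_on_subset[OF inj_skip])
  have "(\<Sum>k\<in>{0..\<sigma>}. q (skip r k) * row_form \<sigma> N (\<lambda>i. M (skip r i)) k t) =
      (if t \<le> \<sigma> then q (skip r t) else 0) + (if \<sigma> < t \<and> t \<le> N then M r (t - Suc \<sigma>) else 0)"
    using dep_t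
    by (auto simp: row_form_eq distrib_left sum.distrib sum.delta' if_distrib[of "\<lambda>z. _ * z"] cong: if_cong)
  then show ?thesis
    using r t skip_neq[of r t] by (auto simp: insert_coord_dual_def row_form_eq skip_def)
qed

lemma insert_coord_dual_row_form_combination:
  assumes r: "r \<le> Suc \<sigma>" and i: "i \<le> Suc \<sigma>"
    and dep: "\<forall>c<N - \<sigma>. M r c = (\<Sum>i\<in>{0..Suc \<sigma>} - {r}. q i * M i c)"
  obtains \<alpha> where "\<And>k. \<bar>\<alpha> k\<bar> \<le> 1 + (\<Sum>k\<le>Suc \<sigma>. \<bar>q k\<bar>)"
    and "\<And>t. t \<le> N \<Longrightarrow> insert_coord_dual r (Suc \<sigma>) q (row_form (Suc \<sigma>) (Suc N) M i) t
      = (\<Sum>k\<in>{0..\<sigma>}. \<alpha> k * row_form \<sigma> N (\<lambda>i. M (skip r i)) k t)"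
proof (cases "i = r")
  case True
  show thesis
  proof (rule that[of "\<lambda>k. if k \<le> \<sigma> then q (skip r k) else 0"])
    have "\<bar>q (skip r k)\<bar> \<le> (\<Sum>k\<le>Suc \<sigma>. \<bar>q k\<bar>)" if "k \<le> \<sigma>" for k
      using that by (intro member_le_sum) (auto simp: skip_def)
    then show "\<bar>if k \<le> \<sigma> then q (skip r k) else 0\<bar> \<le> 1 + (\<Sum>k\<le>Suc \<sigma>. \<bar>q k\<bar>)" for k
      by (smt (verit, ccfv_threshold) sum_nonneg abs_ge_zero)
    show "insert_coord_dual r (Suc \<sigma>) q (row_form (Suc \<sigma>) (Suc N) M i) t
        = (\<Sum>k\<in>{0..\<sigma>}. (if k \<le> \<sigma> then q (skip r k) else 0) * row_form \<sigma> N (\<lambda>i. M (skip r i)) k t)"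
      if "t \<le> N" for t
      using insert_coord_dual_row_form_dependent[OF r that dep] True by simp
  qed
next
  case False
  have "unskip r i \<in> {0..\<sigma>}" using i r False by (auto simp: unskip_def)
  then show thesis
    using insert_coord_dual_row_form[OF r False]
    by (intro that[of "\<lambda>k. if k = unskip r i then 1 else 0"])
      (auto simp: if_distrib[of "\<lambda>z. z * _"] sum.delta intro: sum_nonneg cong: if_cong)
qed

lemma abs_insert_coord_dual_std_basis_le:
  "\<bar>insert_coord_dual r s q (std_basis t) u\<bar> \<le> 1 + (\<Sum>k\<le>s. \<bar>q k\<bar>)"
proof -
  have "\<bar>q (skip r u)\<bar> \<le> (\<Sum>k\<le>s. \<bar>q k\<bar>)" if "u < s"
    using that by (intro member_le_sum) (auto simp: skip_def)
  then show ?thesis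
    unfolding insert_coord_dual_def std_basis_def by (auto intro: sum_nonneg)
qed

lemma int_frames_insert_coord:
  assumes vs: "vs \<in> int_frames N j" and r: "r \<le> Suc N" and D: "D > 0"
    and q: "\<And>k. k \<le> s \<Longrightarrow> real D * q k \<in> \<int>"
  shows "map (insert_coord D r s q) vs \<in> int_frames (Suc N) j"
proof -
  have int: "insert_coord D r s q v t \<in> \<int>" if v: "\<And>k. v k \<in> \<int>" for v t
  proof (cases "t = r")
    case True
    have "(real D * q (skip r u)) * v u \<in> \<int>" if "u < s" for u
      using q[of "skip r u"] that v[of u] by (auto simp: skip_def intro: Ints_mult[of "real D * _"])
    then have "(\<Sum>u<s. (real D * q (skip r u)) * v u) \<in> \<int>" by (intro Ints_sum) auto
    then show ?thesis using True by (simp add: insert_coord_def sum_distrib_left mult_ac)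
  qed (use v in \<open>simp add: insert_coord_def\<close>)
  have zero: "insert_coord D r s q v t = 0" if "\<And>k. k > N \<Longrightarrow> v k = 0" "t > Suc N" for v t
    using that r by (auto simp: insert_coord_def unskip_def)
  have indep: "lin_indep_list (map (insert_coord D r s q) vs)"
    unfolding lin_indep_list_def
  proof (intro allI impI)
    fix c :: "nat \<Rightarrow> real" and a
    assume dep: "\<forall>k. (\<Sum>b<length (map (insert_coord D r s q) vs). c b * (map (insert_coord D r s q) vs ! b) k) = 0"
      and a: "a < length (map (insert_coord D r s q) vs)"
    have "real D * (\<Sum>b<length vs. c b * (vs ! b) k) = 0" for k
      using dep[rule_format, of "skip r k"] by (simp add: sum_distrib_left insert_coord_skip algebra_simps)
    then show "c a = 0" using vs a D unfolding int_frames_def lin_indep_list_def by simp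
  qed
  show ?thesis using vs indep int zero unfolding int_frames_def by auto
qed

lemma proj_norm_insert_coord:
  assumes r: "r \<le> Suc \<sigma>"
  shows "proj_norm (Suc \<sigma>) (Suc N) (map (insert_coord D r s q) vs) = real D ^ length vs * proj_norm \<sigma> N vs"
proof -
  let ?ws = "map (insert_coord D r s q) vs"
  have "wedge_coord ?ws (Suc ` I) = real D ^ length vs * wedge_coord vs I"
    if I: "I \<in> jsets {\<sigma>+1..N} (length vs)" for I
  proof -
    have "finite (Suc ` I)" "card (Suc ` I) = length vs" using I unfolding jsets_def
      by (auto intro: finite_subset simp: card_image)
    then have "wedge_coord ?ws (Suc ` I) = real D ^ length vs * wedge_coord vs ((\<lambda>x. x - 1) ` Suc ` I)"
      by (rule wedge_coord_reindex)
        (use I r in \<open>auto simp: jsets_def strict_mono_on_def insert_coord_def unskip_def\<close>)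
    then show ?thesis by (simp add: image_image)
  qed
  moreover have "(\<Sum>I\<in>jsets {Suc \<sigma>+1..Suc N} (length vs). (wedge_coord ?ws I)\<^sup>2)
      = (\<Sum>I\<in>jsets {\<sigma>+1..N} (length vs). (wedge_coord ?ws (Suc ` I))\<^sup>2)"
    using sum_jsets_image[where g = Suc and S = "{\<sigma>+1..N}" and F = "\<lambda>I. (wedge_coord ?ws I)\<^sup>2"] by simp
  ultimately show ?thesis
    unfolding proj_norm_def length_map
    by (simp add: power_mult_distrib sum_distrib_left[symmetric] real_sqrt_mult)
qed

lemma RMc_norm_le_of_components_le:
  assumes ws: "ws \<noteq> []" and b: "0 \<le> b"
    and comp: "\<And>i J. i \<le> \<sigma> \<Longrightarrow> J \<in> jsets {1..N} (length ws - 1) \<Longrightarrow>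
      \<bar>gram_det N (row_form \<sigma> N M i # map std_basis (sorted_list_of_set J)) ws\<bar> \<le> b"
  shows "RMc_norm \<sigma> N M ws \<le> sqrt (real (card {0..\<sigma>} * card (jsets {1..N} (length ws - 1)))) * b"
proof -
  let ?n = "real (card {0..\<sigma>} * card (jsets {1..N} (length ws - 1)))"
  have "RMc_norm \<sigma> N M ws \<le> sqrt (\<Sum>i\<in>{0..\<sigma>}. \<Sum>J\<in>jsets {1..N} (length ws - 1). b\<^sup>2)"
    unfolding RMc_norm_eq_gram_det[OF ws]
  proof (intro real_sqrt_le_mono sum_mono)
    fix i J assume "i \<in> {0..\<sigma>}" "J \<in> jsets {1..N} (length ws - 1)"
    with comp show "(gram_det N (row_form \<sigma> N M i # map std_basis (sorted_list_of_set J)) ws)\<^sup>2 \<le> b\<^sup>2"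
      by (metis abs_ge_zero atLeastAtMost_iff power2_abs power_mono)
  qed
  also have "(\<Sum>i\<in>{0..\<sigma>}. \<Sum>J\<in>jsets {1..N} (length ws - 1). b\<^sup>2) = ?n * b\<^sup>2"
    by (simp only: sum_constant of_nat_mult mult.assoc)
  finally show ?thesis using b by (simp only: real_sqrt_mult real_sqrt_abs abs_of_nonneg)
qed

lemma abs_gram_det_insert_coord_le:
  assumes r: "r \<le> Suc \<sigma>" and \<sigma>N: "\<sigma> < N"
    and dep: "\<forall>c<N - \<sigma>. M r c = (\<Sum>i\<in>{0..Suc \<sigma>} - {r}. q i * M i c)"
  obtains B where "B \<ge> 0" and "\<And>vs i J. length vs = Suc m \<Longrightarrow> i \<le> Suc \<sigma> \<Longrightarrow> J \<in> jsets {1..Suc N} m \<Longrightarrow>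
    \<bar>gram_det (Suc N) (row_form (Suc \<sigma>) (Suc N) M i # map std_basis (sorted_list_of_set J))
      (map (insert_coord D r (Suc \<sigma>) q) vs)\<bar> \<le> B * RMc_norm \<sigma> N (\<lambda>i. M (skip r i)) vs"
proof -
  let ?M' = "\<lambda>i. M (skip r i)"
  define Y where "Y = 1 + (\<Sum>k\<le>Suc \<sigma>. \<bar>q k\<bar>)"
  obtain C where C: "\<And>vs \<alpha> ys. length vs = Suc m \<Longrightarrow> length ys = m \<Longrightarrow> (\<And>k. \<bar>\<alpha> k\<bar> \<le> Y) \<Longrightarrow>
     (\<And>a u. a < m \<Longrightarrow> u \<le> N \<Longrightarrow> \<bar>(ys ! a) u\<bar> \<le> Y) \<Longrightarrow>
     \<bar>gram_det N ((\<lambda>t. \<Sum>k\<in>{0..\<sigma>}. \<alpha> k * row_form \<sigma> N ?M' k t) # ys) vs\<bar> \<le> C * RMc_norm \<sigma> N ?M' vs"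
    using abs_gram_det_row_form_combination_le[OF \<sigma>N] by blast
  show thesis
  proof (rule that[of "real D ^ Suc m * \<bar>C\<bar>"])
    fix vs :: "(nat \<Rightarrow> real) list" and i J
    assume len: "length vs = Suc m" and i: "i \<le> Suc \<sigma>" and J: "J \<in> jsets {1..Suc N} m"
    obtain \<alpha> where \<alpha>: "\<And>k. \<bar>\<alpha> k\<bar> \<le> Y"
      and dual: "\<And>t. t \<le> N \<Longrightarrow> insert_coord_dual r (Suc \<sigma>) q (row_form (Suc \<sigma>) (Suc N) M i) t
        = (\<Sum>k\<in>{0..\<sigma>}. \<alpha> k * row_form \<sigma> N ?M' k t)"
      using insert_coord_dual_row_form_combination[OF r i dep] unfolding Y_def by blast
    let ?us = "row_form (Suc \<sigma>) (Suc N) M i # map std_basis (sorted_list_of_set J)"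
    let ?ys = "map (insert_coord_dual r (Suc \<sigma>) q \<circ> std_basis) (sorted_list_of_set J)"
    have lenJ: "length (sorted_list_of_set J) = m" using jsets_sorted_list_of_set(2)[OF J] by simp
    have "gram_det (Suc N) ?us (map (insert_coord D r (Suc \<sigma>) q) vs)
        = real D ^ Suc m * gram_det N (map (insert_coord_dual r (Suc \<sigma>) q) ?us) vs"
      using gram_det_insert_coord[of r N "Suc \<sigma>" ?us vs D q] r \<sigma>N len lenJ by simp
    also have "gram_det N (map (insert_coord_dual r (Suc \<sigma>) q) ?us) vs
        = gram_det N ((\<lambda>t. \<Sum>k\<in>{0..\<sigma>}. \<alpha> k * row_form \<sigma> N ?M' k t) # ?ys) vs"
      by (rule gram_det_cong) (auto simp: nth_Cons' dual)
    finally have "\<bar>gram_det (Suc N) ?us (map (insert_coord D r (Suc \<sigma>) q) vs)\<bar>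
        = real D ^ Suc m * \<bar>gram_det N ((\<lambda>t. \<Sum>k\<in>{0..\<sigma>}. \<alpha> k * row_form \<sigma> N ?M' k t) # ?ys) vs\<bar>"
      by (simp add: abs_mult)
    also have "\<dots> \<le> real D ^ Suc m * (C * RMc_norm \<sigma> N ?M' vs)"
      using abs_insert_coord_dual_std_basis_le lenJ len
      by (intro mult_left_mono C \<alpha>) (auto simp: Y_def simp del: sum.atMost_Suc)
    also have "\<dots> \<le> real D ^ Suc m * \<bar>C\<bar> * RMc_norm \<sigma> N ?M' vs"
      using RMc_norm_nonneg[of \<sigma> N ?M' vs] by (simp add: mult_left_mono mult_right_mono mult.assoc)
    finally show "\<bar>gram_det (Suc N) ?us (map (insert_coord D r (Suc \<sigma>) q) vs)\<bar>
        \<le> real D ^ Suc m * \<bar>C\<bar> * RMc_norm \<sigma> N ?M' vs" .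
  qed simp
qed

lemma RMc_norm_insert_coord_le:
  assumes r: "r \<le> Suc \<sigma>" and \<sigma>N: "\<sigma> < N"
    and dep: "\<forall>c<N - \<sigma>. M r c = (\<Sum>i\<in>{0..Suc \<sigma>} - {r}. q i * M i c)"
  obtains K where "K > 0" and "\<And>vs. length vs = Suc m \<Longrightarrow>
    RMc_norm (Suc \<sigma>) (Suc N) M (map (insert_coord D r (Suc \<sigma>) q) vs) \<le> K * RMc_norm \<sigma> N (\<lambda>i. M (skip r i)) vs"
proof -
  obtain B where B: "B \<ge> 0" "\<And>vs i J. length vs = Suc m \<Longrightarrow> i \<le> Suc \<sigma> \<Longrightarrow> J \<in> jsets {1..Suc N} m \<Longrightarrow>
    \<bar>gram_det (Suc N) (row_form (Suc \<sigma>) (Suc N) M i # map std_basis (sorted_list_of_set J))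
      (map (insert_coord D r (Suc \<sigma>) q) vs)\<bar> \<le> B * RMc_norm \<sigma> N (\<lambda>i. M (skip r i)) vs"
    using abs_gram_det_insert_coord_le[OF r \<sigma>N dep] by blast
  let ?n = "sqrt (real (card {0..Suc \<sigma>} * card (jsets {1..Suc N} m)))"
  show thesis
  proof (rule that[of "?n * B + 1"])
    fix vs :: "(nat \<Rightarrow> real) list" assume len: "length vs = Suc m"
    let ?R' = "RMc_norm \<sigma> N (\<lambda>i. M (skip r i)) vs"
    have R': "0 \<le> ?R'" by (rule RMc_norm_nonneg)
    have l: "length (map (insert_coord D r (Suc \<sigma>) q) vs) - 1 = m" using len by simp
    have "RMc_norm (Suc \<sigma>) (Suc N) M (map (insert_coord D r (Suc \<sigma>) q) vs) \<le> ?n * (B * ?R')"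
      by (rule RMc_norm_le_of_components_le[of "map (insert_coord D r (Suc \<sigma>) q) vs" "B * ?R'", unfolded l])
        (use B R' len in auto)
    also have "\<dots> \<le> (?n * B + 1) * ?R'" using R' by (simp add: algebra_simps)
    finally show "RMc_norm (Suc \<sigma>) (Suc N) M (map (insert_coord D r (Suc \<sigma>) q) vs) \<le> (?n * B + 1) * ?R'" .
  qed (use B(1) in \<open>simp add: add_nonneg_pos\<close>)
qed

section \<open>Exponents of approximation\<close>

definition exponent_set :: "'a set \<Rightarrow> ('a \<Rightarrow> real) \<Rightarrow> ('a \<Rightarrow> real) \<Rightarrow> nat \<Rightarrow> real set" where
  "exponent_set F P R j = {v. \<forall>B. \<exists>x\<in>F. P x > B \<and> R x < P x powr (- ((v + 1 - real j) / real j))}"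

lemma omega_eq_Sup_exponent_set:
  "omega j m l M = Sup (ereal ` exponent_set (int_frames (m + l - 1) j) (proj_norm (m - 1) (m + l - 1))
     (RMc_norm (m - 1) (m + l - 1) M) j)"
  unfolding omega_def exponent_set_def Let_def ..

lemma exponent_set_transfer:
  fixes P R :: "'a \<Rightarrow> real" and P' R' :: "'b \<Rightarrow> real"
  assumes j: "j > 0" and c: "c > 0" and K: "K > 0"
    and transfer: "\<And>x'. x' \<in> F' \<Longrightarrow> P' x' > 0 \<Longrightarrow> \<exists>x\<in>F. P x = c * P' x' \<and> R x \<le> K * R' x'"
    and v: "v \<in> exponent_set F' P' R' j" and \<epsilon>: "\<epsilon> > 0"
  shows "v - \<epsilon> \<in> exponent_set F P R j"
proof -
  define e where "e = (v + 1 - real j) / real j"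
  define d where "d = \<epsilon> / real j"
  have d: "d > 0" using \<epsilon> j by (simp add: d_def)
  have exponent: "- ((v - \<epsilon> + 1 - real j) / real j) = d - e"
    using j unfolding d_def e_def by (simp add: field_simps)
  define X where "X = (K / c powr (d - e)) powr (1 / d)"
  have X: "X powr d = K / c powr (d - e)"
    unfolding X_def using K c d by (simp add: powr_powr)
  show ?thesis
    unfolding exponent_set_def mem_Collect_eq exponent
  proof
    fix B
    obtain x' where x': "x' \<in> F'" "P' x' > max (B / c) (max 0 X)" "R' x' < P' x' powr (- e)"
      using v unfolding exponent_set_def e_def by blast
    then obtain x where x: "x \<in> F" "P x = c * P' x'" "R x \<le> K * R' x'"
      using transfer by fastforce
    have P': "P' x' > 0" "P' x' > X" using x'(2) by auto
    have "B < P x" using x'(2) c x(2) by (simp add: divide_less_eq mult.commute)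
    moreover have "R x < P x powr (d - e)"
    proof -
      have "K = X powr d * c powr (d - e)" using X c by simp
      also have "\<dots> < P' x' powr d * c powr (d - e)"
        using P' d c by (intro mult_strict_right_mono powr_less_mono2) (auto simp: X_def)
      finally have "K * P' x' powr (- e) < P' x' powr d * c powr (d - e) * P' x' powr (- e)"
        using P' by simp
      also have "\<dots> = P x powr (d - e)"
        using P' c x(2) by (simp add: powr_mult powr_add[symmetric] mult_ac)
      moreover have "R x < K * P' x' powr (- e)"
        using x(3) mult_strict_left_mono[OF x'(3) K] by linarith
      ultimately show ?thesis by linarith
    qed
    ultimately show "\<exists>x\<in>F. B < P x \<and> R x < P x powr (d - e)" using x(1) by blast
  qed
qed

lemma Sup_exponent_set_le:
  fixes P R :: "'a \<Rightarrow> real" and P' R' :: "'b \<Rightarrow> real"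
  assumes "j > 0" "c > 0" "K > 0"
    and "\<And>x'. x' \<in> F' \<Longrightarrow> P' x' > 0 \<Longrightarrow> \<exists>x\<in>F. P x = c * P' x' \<and> R x \<le> K * R' x'"
  shows "Sup (ereal ` exponent_set F' P' R' j) \<le> Sup (ereal ` exponent_set F P R j)"
proof (rule Sup_least)
  fix x assume "x \<in> ereal ` exponent_set F' P' R' j"
  then obtain v where v: "v \<in> exponent_set F' P' R' j" "x = ereal v" by blast
  show "x \<le> Sup (ereal ` exponent_set F P R j)"
    unfolding v(2)
  proof (rule ereal_le_epsilon2)
    fix \<epsilon> :: real assume "0 < \<epsilon>"
    then have "ereal (v - \<epsilon>) \<le> Sup (ereal ` exponent_set F P R j)"
      using exponent_set_transfer[OF assms v(1)] by (intro Sup_upper) auto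
    then show "ereal v \<le> Sup (ereal ` exponent_set F P R j) + ereal \<epsilon>"
      by (metis add_right_mono diff_add_cancel plus_ereal.simps(1))
  qed
qed

lemma omega_delete_row_ge:
  assumes r: "r \<le> Suc \<sigma>" and \<sigma>N: "\<sigma> < N" and j: "j > 0"
  shows "omega j (Suc (Suc \<sigma>)) (N - \<sigma>) M \<le> omega j (Suc \<sigma>) (N - \<sigma>) (\<lambda>i. M (skip r i))"
proof -
  have "Sup (ereal ` exponent_set (int_frames (Suc N) j) (proj_norm (Suc \<sigma>) (Suc N)) (RMc_norm (Suc \<sigma>) (Suc N) M) j)
      \<le> Sup (ereal ` exponent_set (int_frames N j) (proj_norm \<sigma> N) (RMc_norm \<sigma> N (\<lambda>i. M (skip r i))) j)"
  proof (rule Sup_exponent_set_le[where c = 1 and K = 1])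
    fix vs assume vs: "vs \<in> int_frames (Suc N) j" and pos: "proj_norm (Suc \<sigma>) (Suc N) vs > 0"
    let ?ws = "map (\<lambda>v. v \<circ> skip r) vs"
    have proj: "proj_norm \<sigma> N ?ws = proj_norm (Suc \<sigma>) (Suc N) vs" by (rule proj_norm_skip[OF r])
    have "?ws \<in> int_frames N j" using r \<sigma>N pos proj by (intro int_frames_skip[where \<sigma> = \<sigma>, OF vs]) simp_all
    moreover have "vs \<noteq> []" using vs j by (auto simp: int_frames_def)
    then have "RMc_norm \<sigma> N (\<lambda>i. M (skip r i)) ?ws \<le> RMc_norm (Suc \<sigma>) (Suc N) M vs"
      using \<sigma>N by (intro RMc_norm_skip_le[OF r]) simp_all
    ultimately show "\<exists>ws\<in>int_frames N j. proj_norm \<sigma> N ws = 1 * proj_norm (Suc \<sigma>) (Suc N) vs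
        \<and> RMc_norm \<sigma> N (\<lambda>i. M (skip r i)) ws \<le> 1 * RMc_norm (Suc \<sigma>) (Suc N) M vs"
      using proj by auto
  qed (use j in auto)
  then show ?thesis using \<sigma>N by (simp add: omega_eq_Sup_exponent_set)
qed

lemma omega_delete_dependent_row_le:
  assumes r: "r \<le> Suc \<sigma>" and \<sigma>N: "\<sigma> < N" and j: "j > 0" and q: "\<And>i. q i \<in> \<rat>"
    and dep: "\<forall>c<N - \<sigma>. M r c = (\<Sum>i\<in>{0..Suc \<sigma>} - {r}. q i * M i c)"
  shows "omega j (Suc \<sigma>) (N - \<sigma>) (\<lambda>i. M (skip r i)) \<le> omega j (Suc (Suc \<sigma>)) (N - \<sigma>) M"
proof -
  obtain D :: nat where D: "D > 0" "\<And>k. k \<in> {..Suc \<sigma>} \<Longrightarrow> real D * q k \<in> \<int>"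
    using common_denominator[of "{..Suc \<sigma>}" q] q by blast
  obtain K where K: "K > 0" "\<And>vs. length vs = Suc (j - 1) \<Longrightarrow>
      RMc_norm (Suc \<sigma>) (Suc N) M (map (insert_coord D r (Suc \<sigma>) q) vs) \<le> K * RMc_norm \<sigma> N (\<lambda>i. M (skip r i)) vs"
    using RMc_norm_insert_coord_le[OF r \<sigma>N dep] by blast
  have "Sup (ereal ` exponent_set (int_frames N j) (proj_norm \<sigma> N) (RMc_norm \<sigma> N (\<lambda>i. M (skip r i))) j)
      \<le> Sup (ereal ` exponent_set (int_frames (Suc N) j) (proj_norm (Suc \<sigma>) (Suc N)) (RMc_norm (Suc \<sigma>) (Suc N) M) j)"
  proof (rule Sup_exponent_set_le[where c = "real D ^ j" and K = K])
    fix vs assume vs: "vs \<in> int_frames N j"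
    then have lenj: "length vs = j" by (simp add: int_frames_def)
    then have len: "length vs = Suc (j - 1)" using j by simp
    let ?ws = "map (insert_coord D r (Suc \<sigma>) q) vs"
    have "?ws \<in> int_frames (Suc N) j" using r \<sigma>N D by (intro int_frames_insert_coord[OF vs]) auto
    moreover have "proj_norm (Suc \<sigma>) (Suc N) ?ws = real D ^ j * proj_norm \<sigma> N vs"
      using proj_norm_insert_coord[OF r] lenj by simp
    ultimately show "\<exists>ws\<in>int_frames (Suc N) j. proj_norm (Suc \<sigma>) (Suc N) ws = real D ^ j * proj_norm \<sigma> N vs
        \<and> RMc_norm (Suc \<sigma>) (Suc N) M ws \<le> K * RMc_norm \<sigma> N (\<lambda>i. M (skip r i)) vs"
      using K(2)[OF len] by blast
  qed (use j D K in auto)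
  then show ?thesis using \<sigma>N by (simp add: omega_eq_Sup_exponent_set)
qed

theorem lemma5p7:
  fixes s n r :: nat and A :: "nat \<Rightarrow> nat \<Rightarrow> real"
  assumes "1 \<le> s" and "s < n" and "r \<le> s"
  defines "A' \<equiv> (\<lambda>i c. A (if i < r then i else i + 1) c)"
  shows "(\<forall>j\<in>{1..n-s}. omega j s (n - s) A' \<ge> omega j (s + 1) (n - s) A)
    \<and> ((\<exists>q :: nat \<Rightarrow> real. (\<forall>i. q i \<in> \<rat>) \<and>
          (\<forall>c<n-s. A r c = (\<Sum>i\<in>{0..s}-{r}. q i * A i c)))
        \<longrightarrow> (\<forall>j\<in>{1..n-s}. omega j s (n - s) A' = omega j (s + 1) (n - s) A))"
proof -
  obtain \<sigma> N where s: "s = Suc \<sigma>" and n: "n = Suc N"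
    using assms(1,2) by (cases s, simp, cases n, auto)
  have \<sigma>N: "\<sigma> < N" and r: "r \<le> Suc \<sigma>" using assms(2,3) s n by auto
  have A': "A' = (\<lambda>i. A (skip r i))" unfolding A'_def skip_def by auto
  have ge: "omega j (s + 1) (n - s) A \<le> omega j s (n - s) A'" if "j \<in> {1..n-s}" for j
    using omega_delete_row_ge[OF r \<sigma>N, of j A] that by (simp add: A' s n)
  show ?thesis
  proof (intro conjI ballI impI)
    fix j assume "j \<in> {1..n-s}"
    then show "omega j (s + 1) (n - s) A \<le> omega j s (n - s) A'" by (rule ge)
  next
    fix j assume j: "j \<in> {1..n-s}"
      and "\<exists>q :: nat \<Rightarrow> real. (\<forall>i. q i \<in> \<rat>) \<and> (\<forall>c<n-s. A r c = (\<Sum>i\<in>{0..s}-{r}. q i * A i c))"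
    then obtain q :: "nat \<Rightarrow> real" where q: "\<And>i. q i \<in> \<rat>"
      and dep: "\<forall>c<N - \<sigma>. A r c = (\<Sum>i\<in>{0..Suc \<sigma>}-{r}. q i * A i c)"
      unfolding s n by auto
    have "omega j s (n - s) A' \<le> omega j (s + 1) (n - s) A"
      using omega_delete_dependent_row_le[OF r \<sigma>N _ q dep, of j] j by (simp add: A' s n)
    then show "omega j s (n - s) A' = omega j (s + 1) (n - s) A" using ge[OF j] by (rule antisym)
  qed
qed

end
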